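(* Let $V$ be a finite set of discrete random variables with joint distribution $P$ and let $\mathcal{G}_{\texttt{FD}}$ be the (acyclic) FD-induced graph on $V$. Run the following procedure. Stage 1: let $\mathcal{S}_2$ be the graph on $V$ with no edges; for each node compute its depth $d(X)$ in $\mathcal{G}_{\texttt{FD}}$ (length of a longest directed path from a root, i.e. a node without parents, to $X$); while the current $\mathcal{G}_{\texttt{FD}}$ has a node with at least one parent, pick a node $X$ of maximal depth, pick any parent $Y$ of $X$ in the current $\mathcal{G}_{\texttt{FD}}$ (the paper picks one of minimal cardinality), add the undirected edge $X-Y$ to $\mathcal{S}_2$, and delete $X$ and its incident edges from $\mathcal{G}_{\texttt{FD}}$. Let $R$ be the set of nodes remaining (the root nodes of the original $\mathcal{G}_{\texttt{FD}}$). Stage 2: let $\mathcal{S}_1$ be the skeleton over $R$ returned by standard (FCI) skeleton learning on $R$, which is assumed to be a harmonious skeleton over $R$ with respect to the marginal of $P$ on $R$. Then $\mathcal{S}=\mathcal{S}_1\cup\mathcal{S}_2$ is a harmonious skeleton over $V$ with respect to $P$.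
   Context: Standing assumption: every variable takes at least two values with positive probability. $X\xrightarrow{\texttt{FD}} Y$ means $Y=f(X)$ almost surely for a deterministic $f$; $\mathcal{G}_{\texttt{FD}}$ has vertex set $V$ and a directed edge $(X,Y)$ whenever $X\xrightarrow{\texttt{FD}} Y$. A directed mixed graph has at most one edge between two nodes, directed ($\to$) or bidirected ($\leftrightarrow$). On a path, a non-endpoint node is a collider if both adjacent edges have arrowheads into it. A path is blocked by a set $W$ if some non-endpoint node is either a non-collider in $W$ or a collider such that neither it nor any descendant is in $W$; $X,Y$ are m-separated by $W$ if all paths between them are blocked. A MAG is a directed mixed graph with no directed or almost directed cycle ($X\to\cdots\to Z\leftrightarrow X$) in which every non-adjacent pair is m-separated by some set. $P$ satisfies GMP w.r.t. a MAG $\mathcal{G}$ if m-separation of $X,Y$ by $W$ in $\mathcal{G}$ implies $X\perp Y\mid W$ under $P$. An undirected graph $\mathcal{S}$ is a harmonious skeleton w.r.t. $P$ if (1) some MAG $\mathcal{G}$ has the same adjacencies as $\mathcal{S}$, (2) $P$ satisfies GMP w.r.t. $\mathcal{G}$, and (3) no proper subgraph of $\mathcal{S}$ (obtained by deleting edges) satisfies (1) and (2). *)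

theory Defs
  imports "HOL-Probability.Probability"
begin

text \<open>A joint distribution of the discrete random variables indexed by 'v is a pmf
  over assignments 'v => 'a.  Variable X is the coordinate map (\<lambda>\<omega>. \<omega> X).\<close>

definition fdep :: "('v \<Rightarrow> 'a) pmf \<Rightarrow> 'v \<Rightarrow> 'v \<Rightarrow> bool" where
  "fdep P X Y \<longleftrightarrow> (\<exists>f. AE \<omega> in measure_pmf P. \<omega> Y = f (\<omega> X))"

definition fd_graph :: "('v \<Rightarrow> 'a) pmf \<Rightarrow> 'v set \<Rightarrow> ('v \<times> 'v) set" where
  "fd_graph P V = {(X, Y). X \<in> V \<and> Y \<in> V \<and> X \<noteq> Y \<and> fdep P X Y}"

definition cond_indep :: "('v \<Rightarrow> 'a) pmf \<Rightarrow> 'v \<Rightarrow> 'v \<Rightarrow> 'v set \<Rightarrow> bool" where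
  "cond_indep P X Y W \<longleftrightarrow>
     (\<forall>x y w.
        measure_pmf.prob P {\<omega>. \<omega> X = x \<and> \<omega> Y = y \<and> (\<forall>v\<in>W. \<omega> v = w v)}
          * measure_pmf.prob P {\<omega>. \<forall>v\<in>W. \<omega> v = w v}
        = measure_pmf.prob P {\<omega>. \<omega> X = x \<and> (\<forall>v\<in>W. \<omega> v = w v)}
          * measure_pmf.prob P {\<omega>. \<omega> Y = y \<and> (\<forall>v\<in>W. \<omega> v = w v)})"

type_synonym 'v mixed_graph = "('v \<times> 'v) set \<times> 'v set set"

definition dir :: "'v mixed_graph \<Rightarrow> ('v \<times> 'v) set" where "dir G = fst G"
definition bid :: "'v mixed_graph \<Rightarrow> 'v set set" where "bid G = snd G"

definition adj :: "'v mixed_graph \<Rightarrow> 'v \<Rightarrow> 'v \<Rightarrow> bool" where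
  "adj G x y \<longleftrightarrow> (x, y) \<in> dir G \<or> (y, x) \<in> dir G \<or> {x, y} \<in> bid G"

definition arrow_into :: "'v mixed_graph \<Rightarrow> 'v \<Rightarrow> 'v \<Rightarrow> bool" where
  "arrow_into G u v \<longleftrightarrow> (u, v) \<in> dir G \<or> {u, v} \<in> bid G"

definition descendants :: "'v mixed_graph \<Rightarrow> 'v \<Rightarrow> 'v set" where
  "descendants G v = {w. (v, w) \<in> (dir G)\<^sup>*}"

definition mg_path :: "'v mixed_graph \<Rightarrow> 'v \<Rightarrow> 'v \<Rightarrow> 'v list \<Rightarrow> bool" where
  "mg_path G X Y xs \<longleftrightarrow> 2 \<le> length xs \<and> distinct xs \<and> hd xs = X \<and> last xs = Y \<and>
     successively (adj G) xs"

definition is_collider :: "'v mixed_graph \<Rightarrow> 'v list \<Rightarrow> nat \<Rightarrow> bool" where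
  "is_collider G xs i \<longleftrightarrow> arrow_into G (xs ! (i - 1)) (xs ! i) \<and> arrow_into G (xs ! (i + 1)) (xs ! i)"

definition blocked :: "'v mixed_graph \<Rightarrow> 'v list \<Rightarrow> 'v set \<Rightarrow> bool" where
  "blocked G xs W \<longleftrightarrow> (\<exists>i. 0 < i \<and> i < length xs - 1 \<and>
      ((\<not> is_collider G xs i \<and> xs ! i \<in> W) \<or>
       (is_collider G xs i \<and> descendants G (xs ! i) \<inter> W = {})))"

definition m_separated :: "'v mixed_graph \<Rightarrow> 'v \<Rightarrow> 'v \<Rightarrow> 'v set \<Rightarrow> bool" where
  "m_separated G X Y W \<longleftrightarrow> (\<forall>xs. mg_path G X Y xs \<longrightarrow> blocked G xs W)"

definition is_MAG :: "'v set \<Rightarrow> 'v mixed_graph \<Rightarrow> bool" where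
  "is_MAG U G \<longleftrightarrow>
     dir G \<subseteq> U \<times> U \<and>
     (\<forall>e\<in>bid G. \<exists>x y. e = {x, y} \<and> x \<noteq> y \<and> x \<in> U \<and> y \<in> U) \<and>
     (\<forall>x. (x, x) \<notin> dir G) \<and>
     (\<forall>x y. (x, y) \<in> dir G \<longrightarrow> (y, x) \<notin> dir G \<and> {x, y} \<notin> bid G) \<and>
     acyclic (dir G) \<and>
     (\<forall>x z. {x, z} \<in> bid G \<longrightarrow> (x, z) \<notin> (dir G)\<^sup>+) \<and>
     (\<forall>x\<in>U. \<forall>y\<in>U. x \<noteq> y \<and> \<not> adj G x y \<longrightarrow> (\<exists>W \<subseteq> U - {x, y}. m_separated G x y W))"

definition GMP :: "('v \<Rightarrow> 'a) pmf \<Rightarrow> 'v set \<Rightarrow> 'v mixed_graph \<Rightarrow> bool" where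
  "GMP P U G \<longleftrightarrow> (\<forall>X\<in>U. \<forall>Y\<in>U. \<forall>W. X \<noteq> Y \<and> W \<subseteq> U - {X, Y} \<and> m_separated G X Y W
       \<longrightarrow> cond_indep P X Y W)"

definition skeleton :: "'v mixed_graph \<Rightarrow> 'v set set" where
  "skeleton G = {{x, y} | x y. adj G x y}"

definition sat12 :: "('v \<Rightarrow> 'a) pmf \<Rightarrow> 'v set \<Rightarrow> 'v set set \<Rightarrow> bool" where
  "sat12 P U S \<longleftrightarrow> (\<exists>G. is_MAG U G \<and> skeleton G = S \<and> GMP P U G)"

text \<open>Harmonious skeleton over the vertex set U w.r.t. (the marginal on U of) P.\<close>
definition harmonious :: "('v \<Rightarrow> 'a) pmf \<Rightarrow> 'v set \<Rightarrow> 'v set set \<Rightarrow> bool" where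
  "harmonious P U S \<longleftrightarrow> sat12 P U S \<and> \<not> (\<exists>S'. S' \<subset> S \<and> sat12 P U S')"

definition fd_root :: "('v \<Rightarrow> 'a) pmf \<Rightarrow> 'v set \<Rightarrow> 'v \<Rightarrow> bool" where
  "fd_root P V X \<longleftrightarrow> X \<in> V \<and> (\<forall>Y. (Y, X) \<notin> fd_graph P V)"

definition fd_depth :: "('v \<Rightarrow> 'a) pmf \<Rightarrow> 'v set \<Rightarrow> 'v \<Rightarrow> nat" where
  "fd_depth P V X = Max {length xs - 1 | xs. xs \<noteq> [] \<and> distinct xs \<and>
       successively (\<lambda>a b. (a, b) \<in> fd_graph P V) xs \<and> fd_root P V (hd xs) \<and> last xs = X}"

text \<open>One iteration: state = (current node set of G_FD, edges of S_2).\<close>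
inductive stage1_step :: "('v \<Rightarrow> 'a) pmf \<Rightarrow> 'v set \<Rightarrow> 'v set \<times> 'v set set \<Rightarrow> 'v set \<times> 'v set set \<Rightarrow> bool"
  for P V where
  "\<lbrakk> X \<in> C; \<forall>Z\<in>C. fd_depth P V Z \<le> fd_depth P V X; Y \<in> C; (Y, X) \<in> fd_graph P V \<rbrakk>
   \<Longrightarrow> stage1_step P V (C, S) (C - {X}, insert {X, Y} S)"

definition stage1_run :: "('v \<Rightarrow> 'a) pmf \<Rightarrow> 'v set \<Rightarrow> 'v set \<Rightarrow> 'v set set \<Rightarrow> bool" where
  "stage1_run P V R S2 \<longleftrightarrow> (stage1_step P V)\<^sup>*\<^sup>* (V, {}) (R, S2) \<and>
     \<not> (\<exists>X\<in>R. \<exists>Y\<in>R. (Y, X) \<in> fd_graph P V)"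

end

theory Submission
  imports Defs
begin

text \<open>
  Read backwards, Stage 1 rebuilds \<open>V\<close> from \<open>R\<close> by repeatedly attaching a new vertex \<open>t\<close> to a
  vertex \<open>p\<close> already present, where \<open>t = f p\<close> almost surely. It therefore suffices that attaching
  such a pendant vertex by the edge \<open>{p, t}\<close> to a harmonious skeleton over \<open>U\<close> yields a
  harmonious skeleton over \<open>insert t U\<close>.

  Existence: add the directed edge \<open>p \<rightarrow> t\<close> to a MAG witnessing the old skeleton. An
  m-separation in the new MAG that involves \<open>t\<close> yields m-separations in the old MAG with \<open>p\<close> in
  place of \<open>t\<close>, and the required conditional independence follows from the old ones by the
  semi-graphoid rules (decomposition, weak union, contraction), because \<open>t\<close> is a function of \<open>p\<close>.

  Minimality: in a MAG witnessing a smaller skeleton, \<open>t\<close> cannot be isolated, since otherwise it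
  would be independent of \<open>p\<close> and hence, being a function of \<open>p\<close>, constant. So \<open>t\<close> is pendant at
  \<open>p\<close>, and deleting it leaves a MAG over \<open>U\<close> witnessing a proper part of the old skeleton.
\<close>

section \<open>Conditional independence of random variables\<close>

abbreviation pmf_prob :: "'w pmf \<Rightarrow> 'w set \<Rightarrow> real" where
  "pmf_prob P A \<equiv> measure_pmf.prob P A"

definition indep_given :: "'w pmf \<Rightarrow> ('w \<Rightarrow> 'b) \<Rightarrow> ('w \<Rightarrow> 'c) \<Rightarrow> ('w \<Rightarrow> 'd) \<Rightarrow> bool" where
  "indep_given P f g h \<longleftrightarrow> (\<forall>a b c.
     pmf_prob P {\<omega>. f \<omega> = a \<and> g \<omega> = b \<and> h \<omega> = c} * pmf_prob P {\<omega>. h \<omega> = c}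
     = pmf_prob P {\<omega>. f \<omega> = a \<and> h \<omega> = c} * pmf_prob P {\<omega>. g \<omega> = b \<and> h \<omega> = c})"

lemma pmf_prob_cong_set_pmf:
  assumes "\<And>\<omega>. \<omega> \<in> set_pmf P \<Longrightarrow> \<omega> \<in> A \<longleftrightarrow> \<omega> \<in> B"
  shows "pmf_prob P A = pmf_prob P B"
proof -
  have "A \<inter> set_pmf P = B \<inter> set_pmf P" using assms by blast
  then show ?thesis by (metis measure_Int_set_pmf)
qed

lemma pmf_prob_mono: "A \<subseteq> B \<Longrightarrow> pmf_prob P A \<le> pmf_prob P B"
  by (rule measure_pmf.finite_measure_mono) auto

lemma indep_given_sym: "indep_given P f g h \<Longrightarrow> indep_given P g f h"
  unfolding indep_given_def
proof (intro allI)
  fix a b c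
  assume "\<forall>a b c. pmf_prob P {\<omega>. f \<omega> = a \<and> g \<omega> = b \<and> h \<omega> = c} * pmf_prob P {\<omega>. h \<omega> = c}
      = pmf_prob P {\<omega>. f \<omega> = a \<and> h \<omega> = c} * pmf_prob P {\<omega>. g \<omega> = b \<and> h \<omega> = c}"
  moreover have "{\<omega>. g \<omega> = a \<and> f \<omega> = b \<and> h \<omega> = c} = {\<omega>. f \<omega> = b \<and> g \<omega> = a \<and> h \<omega> = c}" by auto
  ultimately show "pmf_prob P {\<omega>. g \<omega> = a \<and> f \<omega> = b \<and> h \<omega> = c} * pmf_prob P {\<omega>. h \<omega> = c} =
      pmf_prob P {\<omega>. g \<omega> = a \<and> h \<omega> = c} * pmf_prob P {\<omega>. f \<omega> = b \<and> h \<omega> = c}"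
    by (simp add: mult.commute)
qed

lemma indep_given_cong:
  assumes "indep_given P f g h"
    and "\<And>\<omega>. \<omega> \<in> set_pmf P \<Longrightarrow> f' \<omega> = f \<omega>" "\<And>\<omega>. \<omega> \<in> set_pmf P \<Longrightarrow> g' \<omega> = g \<omega>"
  shows "indep_given P f' g' h"
  unfolding indep_given_def
proof (intro allI)
  fix a b c
  have "pmf_prob P {\<omega>. f' \<omega> = a \<and> g' \<omega> = b \<and> h \<omega> = c} = pmf_prob P {\<omega>. f \<omega> = a \<and> g \<omega> = b \<and> h \<omega> = c}"
    "pmf_prob P {\<omega>. f' \<omega> = a \<and> h \<omega> = c} = pmf_prob P {\<omega>. f \<omega> = a \<and> h \<omega> = c}"
    "pmf_prob P {\<omega>. g' \<omega> = b \<and> h \<omega> = c} = pmf_prob P {\<omega>. g \<omega> = b \<and> h \<omega> = c}"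
    by (rule pmf_prob_cong_set_pmf; use assms(2,3) in auto)+
  with assms(1) show "pmf_prob P {\<omega>. f' \<omega> = a \<and> g' \<omega> = b \<and> h \<omega> = c} * pmf_prob P {\<omega>. h \<omega> = c} =
      pmf_prob P {\<omega>. f' \<omega> = a \<and> h \<omega> = c} * pmf_prob P {\<omega>. g' \<omega> = b \<and> h \<omega> = c}"
    unfolding indep_given_def by simp
qed

lemma indep_given_cond_cong:
  assumes "indep_given P f g h"
    and "\<And>\<omega> \<omega>'. \<omega> \<in> set_pmf P \<Longrightarrow> \<omega>' \<in> set_pmf P \<Longrightarrow> h' \<omega> = h' \<omega>' \<longleftrightarrow> h \<omega> = h \<omega>'"
  shows "indep_given P f g h'"
  unfolding indep_given_def
proof (intro allI)
  fix a b c
  show "pmf_prob P {\<omega>. f \<omega> = a \<and> g \<omega> = b \<and> h' \<omega> = c} * pmf_prob P {\<omega>. h' \<omega> = c} =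
      pmf_prob P {\<omega>. f \<omega> = a \<and> h' \<omega> = c} * pmf_prob P {\<omega>. g \<omega> = b \<and> h' \<omega> = c}"
  proof (cases "\<exists>\<omega>\<^sub>0\<in>set_pmf P. h' \<omega>\<^sub>0 = c")
    case True
    then obtain \<omega>\<^sub>0 where "\<omega>\<^sub>0 \<in> set_pmf P" "h' \<omega>\<^sub>0 = c" by blast
    then have same_class: "\<And>\<omega>. \<omega> \<in> set_pmf P \<Longrightarrow> h' \<omega> = c \<longleftrightarrow> h \<omega> = h \<omega>\<^sub>0"
      using assms(2) by metis
    have "pmf_prob P {\<omega>. f \<omega> = a \<and> g \<omega> = b \<and> h' \<omega> = c} = pmf_prob P {\<omega>. f \<omega> = a \<and> g \<omega> = b \<and> h \<omega> = h \<omega>\<^sub>0}"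
      "pmf_prob P {\<omega>. f \<omega> = a \<and> h' \<omega> = c} = pmf_prob P {\<omega>. f \<omega> = a \<and> h \<omega> = h \<omega>\<^sub>0}"
      "pmf_prob P {\<omega>. g \<omega> = b \<and> h' \<omega> = c} = pmf_prob P {\<omega>. g \<omega> = b \<and> h \<omega> = h \<omega>\<^sub>0}"
      "pmf_prob P {\<omega>. h' \<omega> = c} = pmf_prob P {\<omega>. h \<omega> = h \<omega>\<^sub>0}"
      by (rule pmf_prob_cong_set_pmf; use same_class in auto)+
    with assms(1) show ?thesis unfolding indep_given_def by simp
  next
    case False
    have "pmf_prob P {\<omega>. h' \<omega> = c} = pmf_prob P {}" "pmf_prob P {\<omega>. f \<omega> = a \<and> h' \<omega> = c} = pmf_prob P {}"
      by (rule pmf_prob_cong_set_pmf; use False in auto)+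
    then show ?thesis by simp
  qed
qed

lemma indep_given_determined:
  assumes "\<And>\<omega>. \<omega> \<in> set_pmf P \<Longrightarrow> g \<omega> = \<phi> (h \<omega>)"
  shows "indep_given P f g h"
  unfolding indep_given_def
proof (intro allI)
  fix a b c
  show "pmf_prob P {\<omega>. f \<omega> = a \<and> g \<omega> = b \<and> h \<omega> = c} * pmf_prob P {\<omega>. h \<omega> = c} =
      pmf_prob P {\<omega>. f \<omega> = a \<and> h \<omega> = c} * pmf_prob P {\<omega>. g \<omega> = b \<and> h \<omega> = c}"
  proof (cases "b = \<phi> c")
    case True
    have "pmf_prob P {\<omega>. f \<omega> = a \<and> g \<omega> = b \<and> h \<omega> = c} = pmf_prob P {\<omega>. f \<omega> = a \<and> h \<omega> = c}"
      "pmf_prob P {\<omega>. g \<omega> = b \<and> h \<omega> = c} = pmf_prob P {\<omega>. h \<omega> = c}"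
      by (rule pmf_prob_cong_set_pmf; use assms True in auto)+
    then show ?thesis by simp
  next
    case False
    have "pmf_prob P {\<omega>. f \<omega> = a \<and> g \<omega> = b \<and> h \<omega> = c} = pmf_prob P {}"
      "pmf_prob P {\<omega>. g \<omega> = b \<and> h \<omega> = c} = pmf_prob P {}"
      by (rule pmf_prob_cong_set_pmf; use assms False in auto)+
    then show ?thesis by simp
  qed
qed

lemma pmf_prob_sum_over_values:
  "ennreal (pmf_prob P (E \<inter> {\<omega>. g \<omega> \<in> B})) =
     (\<integral>\<^sup>+b. ennreal (pmf_prob P (E \<inter> {\<omega>. g \<omega> = b})) \<partial>count_space (B \<inter> g ` set_pmf P))"
proof -
  let ?I = "B \<inter> g ` set_pmf P"
  let ?X = "\<lambda>b. E \<inter> {\<omega>. g \<omega> = b} \<inter> set_pmf P"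
  have countable: "countable ?I" by (intro countable_Int2 countable_image) simp
  have disjoint: "disjoint_family_on ?X ?I" unfolding disjoint_family_on_def by auto
  have union: "E \<inter> {\<omega>. g \<omega> \<in> B} \<inter> set_pmf P = \<Union>(?X ` ?I)" by auto
  have "ennreal (pmf_prob P (E \<inter> {\<omega>. g \<omega> \<in> B}))
      = emeasure (measure_pmf P) (E \<inter> {\<omega>. g \<omega> \<in> B} \<inter> set_pmf P)"
    by (simp add: measure_Int_set_pmf measure_pmf.emeasure_eq_measure)
  also have "\<dots> = (\<integral>\<^sup>+b. emeasure (measure_pmf P) (?X b) \<partial>count_space ?I)"
    unfolding union by (rule emeasure_UN_countable) (use countable disjoint in auto)
  also have "\<dots> = (\<integral>\<^sup>+b. ennreal (pmf_prob P (E \<inter> {\<omega>. g \<omega> = b})) \<partial>count_space ?I)"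
    by (simp add: emeasure_Int_set_pmf measure_pmf.emeasure_eq_measure measure_Int_set_pmf
        Int_assoc[symmetric])
  finally show ?thesis .
qed

lemma indep_given_comp:
  assumes "indep_given P f g h"
  shows "indep_given P f (\<lambda>\<omega>. \<psi> (g \<omega>)) h"
  unfolding indep_given_def
proof (intro allI)
  fix a b' c
  let ?I = "\<psi> -` {b'} \<inter> g ` set_pmf P"
  let ?Pr = "\<lambda>A. ennreal (pmf_prob P A)"
  have ci: "\<And>b. pmf_prob P {\<omega>. f \<omega> = a \<and> g \<omega> = b \<and> h \<omega> = c} * pmf_prob P {\<omega>. h \<omega> = c}
      = pmf_prob P {\<omega>. f \<omega> = a \<and> h \<omega> = c} * pmf_prob P {\<omega>. g \<omega> = b \<and> h \<omega> = c}"
    using assms unfolding indep_given_def by blast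
  have split_fgh: "?Pr {\<omega>. f \<omega> = a \<and> \<psi> (g \<omega>) = b' \<and> h \<omega> = c} =
      (\<integral>\<^sup>+b. ?Pr {\<omega>. f \<omega> = a \<and> g \<omega> = b \<and> h \<omega> = c} \<partial>count_space ?I)"
  proof -
    have "{\<omega>. f \<omega> = a \<and> \<psi> (g \<omega>) = b' \<and> h \<omega> = c} = {\<omega>. f \<omega> = a \<and> h \<omega> = c} \<inter> {\<omega>. g \<omega> \<in> \<psi> -` {b'}}"
      "\<And>b. {\<omega>. f \<omega> = a \<and> h \<omega> = c} \<inter> {\<omega>. g \<omega> = b} = {\<omega>. f \<omega> = a \<and> g \<omega> = b \<and> h \<omega> = c}"
      by auto
    then show ?thesis using pmf_prob_sum_over_values[of P "{\<omega>. f \<omega> = a \<and> h \<omega> = c}" g "\<psi> -` {b'}"]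
      by simp
  qed
  have split_gh: "?Pr {\<omega>. \<psi> (g \<omega>) = b' \<and> h \<omega> = c} =
      (\<integral>\<^sup>+b. ?Pr {\<omega>. g \<omega> = b \<and> h \<omega> = c} \<partial>count_space ?I)"
  proof -
    have "{\<omega>. \<psi> (g \<omega>) = b' \<and> h \<omega> = c} = {\<omega>. h \<omega> = c} \<inter> {\<omega>. g \<omega> \<in> \<psi> -` {b'}}"
      "\<And>b. {\<omega>. h \<omega> = c} \<inter> {\<omega>. g \<omega> = b} = {\<omega>. g \<omega> = b \<and> h \<omega> = c}"
      by auto
    then show ?thesis using pmf_prob_sum_over_values[of P "{\<omega>. h \<omega> = c}" g "\<psi> -` {b'}"]
      by simp
  qed
  have "?Pr {\<omega>. f \<omega> = a \<and> \<psi> (g \<omega>) = b' \<and> h \<omega> = c} * ?Pr {\<omega>. h \<omega> = c}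
      = (\<integral>\<^sup>+b. ?Pr {\<omega>. f \<omega> = a \<and> g \<omega> = b \<and> h \<omega> = c} * ?Pr {\<omega>. h \<omega> = c} \<partial>count_space ?I)"
    unfolding split_fgh by (simp add: nn_integral_multc)
  also have "\<dots> = (\<integral>\<^sup>+b. ?Pr {\<omega>. f \<omega> = a \<and> h \<omega> = c} * ?Pr {\<omega>. g \<omega> = b \<and> h \<omega> = c} \<partial>count_space ?I)"
    by (rule nn_integral_cong) (simp add: ennreal_mult[symmetric] ci)
  also have "\<dots> = ?Pr {\<omega>. f \<omega> = a \<and> h \<omega> = c} * ?Pr {\<omega>. \<psi> (g \<omega>) = b' \<and> h \<omega> = c}"
    unfolding split_gh by (simp add: nn_integral_cmult)
  finally show "pmf_prob P {\<omega>. f \<omega> = a \<and> \<psi> (g \<omega>) = b' \<and> h \<omega> = c} * pmf_prob P {\<omega>. h \<omega> = c} =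
      pmf_prob P {\<omega>. f \<omega> = a \<and> h \<omega> = c} * pmf_prob P {\<omega>. \<psi> (g \<omega>) = b' \<and> h \<omega> = c}"
    by (simp add: ennreal_mult[symmetric] ennreal_inj)
qed

lemma indep_given_pair_snd_iff:
  "indep_given P f (\<lambda>\<omega>. (g \<omega>, k \<omega>)) h \<longleftrightarrow> (\<forall>a b w c.
     pmf_prob P {\<omega>. f \<omega> = a \<and> g \<omega> = b \<and> k \<omega> = w \<and> h \<omega> = c} * pmf_prob P {\<omega>. h \<omega> = c}
     = pmf_prob P {\<omega>. f \<omega> = a \<and> h \<omega> = c} * pmf_prob P {\<omega>. g \<omega> = b \<and> k \<omega> = w \<and> h \<omega> = c})"
  unfolding indep_given_def by simp

lemma indep_given_pair_cond_iff:
  "indep_given P f g (\<lambda>\<omega>. (k \<omega>, h \<omega>)) \<longleftrightarrow> (\<forall>a b w c.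
     pmf_prob P {\<omega>. f \<omega> = a \<and> g \<omega> = b \<and> k \<omega> = w \<and> h \<omega> = c} * pmf_prob P {\<omega>. k \<omega> = w \<and> h \<omega> = c}
     = pmf_prob P {\<omega>. f \<omega> = a \<and> k \<omega> = w \<and> h \<omega> = c} * pmf_prob P {\<omega>. g \<omega> = b \<and> k \<omega> = w \<and> h \<omega> = c})"
  unfolding indep_given_def by simp

lemma indep_given_contraction:
  assumes "indep_given P f g (\<lambda>\<omega>. (k \<omega>, h \<omega>))" and "indep_given P f k h"
  shows "indep_given P f (\<lambda>\<omega>. (g \<omega>, k \<omega>)) h"
  unfolding indep_given_pair_snd_iff
proof (intro allI)
  fix a b w c
  define A where "A = pmf_prob P {\<omega>. f \<omega> = a \<and> g \<omega> = b \<and> k \<omega> = w \<and> h \<omega> = c}"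
  define B where "B = pmf_prob P {\<omega>. k \<omega> = w \<and> h \<omega> = c}"
  define C where "C = pmf_prob P {\<omega>. f \<omega> = a \<and> k \<omega> = w \<and> h \<omega> = c}"
  define D where "D = pmf_prob P {\<omega>. g \<omega> = b \<and> k \<omega> = w \<and> h \<omega> = c}"
  define E where "E = pmf_prob P {\<omega>. f \<omega> = a \<and> h \<omega> = c}"
  define Z where "Z = pmf_prob P {\<omega>. h \<omega> = c}"
  have AB: "A * B = C * D"
    using assms(1) unfolding indep_given_pair_cond_iff A_def B_def C_def D_def by blast
  have CZ: "C * Z = E * B"
    using assms(2) unfolding indep_given_def C_def Z_def E_def B_def by blast
  have "A * Z = E * D"
  proof (cases "B = 0")
    case True
    have "0 \<le> A" "A \<le> B" "0 \<le> D" "D \<le> B"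
      unfolding A_def B_def D_def by (auto intro: pmf_prob_mono)
    with True show ?thesis by simp
  next
    case False
    have "A * Z * B = E * D * B" using AB CZ by (metis mult.assoc mult.commute)
    with False show ?thesis by simp
  qed
  then show "pmf_prob P {\<omega>. f \<omega> = a \<and> g \<omega> = b \<and> k \<omega> = w \<and> h \<omega> = c} * pmf_prob P {\<omega>. h \<omega> = c}
      = pmf_prob P {\<omega>. f \<omega> = a \<and> h \<omega> = c} * pmf_prob P {\<omega>. g \<omega> = b \<and> k \<omega> = w \<and> h \<omega> = c}"
    unfolding A_def Z_def E_def D_def .
qed

lemma indep_given_weak_union:
  assumes "indep_given P f (\<lambda>\<omega>. (g \<omega>, k \<omega>)) h"
  shows "indep_given P f g (\<lambda>\<omega>. (k \<omega>, h \<omega>))"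
  unfolding indep_given_pair_cond_iff
proof (intro allI)
  fix a b w c
  define A where "A = pmf_prob P {\<omega>. f \<omega> = a \<and> g \<omega> = b \<and> k \<omega> = w \<and> h \<omega> = c}"
  define B where "B = pmf_prob P {\<omega>. k \<omega> = w \<and> h \<omega> = c}"
  define C where "C = pmf_prob P {\<omega>. f \<omega> = a \<and> k \<omega> = w \<and> h \<omega> = c}"
  define D where "D = pmf_prob P {\<omega>. g \<omega> = b \<and> k \<omega> = w \<and> h \<omega> = c}"
  define E where "E = pmf_prob P {\<omega>. f \<omega> = a \<and> h \<omega> = c}"
  define Z where "Z = pmf_prob P {\<omega>. h \<omega> = c}"
  have AZ: "A * Z = E * D"
    using assms unfolding indep_given_pair_snd_iff A_def Z_def E_def D_def by blast
  have "indep_given P f k h"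
    using indep_given_comp[OF assms, of snd] by simp
  then have CZ: "C * Z = E * B"
    unfolding indep_given_def C_def Z_def E_def B_def by blast
  have "A * B = C * D"
  proof (cases "Z = 0")
    case True
    have "0 \<le> A" "A \<le> B" "0 \<le> C" "C \<le> B" "B \<le> Z"
      unfolding A_def B_def C_def Z_def by (auto intro: pmf_prob_mono)
    with True have "A = 0" "C = 0" by linarith+
    then show ?thesis by simp
  next
    case False
    have "A * B * Z = C * D * Z" using AZ CZ by (metis mult.assoc mult.commute)
    with False show ?thesis by simp
  qed
  then show "pmf_prob P {\<omega>. f \<omega> = a \<and> g \<omega> = b \<and> k \<omega> = w \<and> h \<omega> = c} * pmf_prob P {\<omega>. k \<omega> = w \<and> h \<omega> = c}
      = pmf_prob P {\<omega>. f \<omega> = a \<and> k \<omega> = w \<and> h \<omega> = c} * pmf_prob P {\<omega>. g \<omega> = b \<and> k \<omega> = w \<and> h \<omega> = c}"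
    unfolding A_def B_def C_def D_def .
qed

lemma cond_indep_iff_indep_given:
  "cond_indep P X Y W \<longleftrightarrow> indep_given P (\<lambda>\<omega>. \<omega> X) (\<lambda>\<omega>. \<omega> Y) (\<lambda>\<omega>. restrict \<omega> W)"
proof -
  have restrict_eq: "restrict \<omega> W = c \<longleftrightarrow> c \<in> extensional W \<and> (\<forall>v\<in>W. \<omega> v = c v)" for \<omega> c
    by (auto simp: fun_eq_iff restrict_def extensional_def)
  show ?thesis
  proof
    assume "cond_indep P X Y W"
    then show "indep_given P (\<lambda>\<omega>. \<omega> X) (\<lambda>\<omega>. \<omega> Y) (\<lambda>\<omega>. restrict \<omega> W)"
      unfolding indep_given_def
    proof (intro allI)
      fix a b c
      show "pmf_prob P {\<omega>. \<omega> X = a \<and> \<omega> Y = b \<and> restrict \<omega> W = c} * pmf_prob P {\<omega>. restrict \<omega> W = c} =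
          pmf_prob P {\<omega>. \<omega> X = a \<and> restrict \<omega> W = c} * pmf_prob P {\<omega>. \<omega> Y = b \<and> restrict \<omega> W = c}"
        using \<open>cond_indep P X Y W\<close> unfolding cond_indep_def restrict_eq
        by (cases "c \<in> extensional W") simp_all
    qed
  next
    assume H: "indep_given P (\<lambda>\<omega>. \<omega> X) (\<lambda>\<omega>. \<omega> Y) (\<lambda>\<omega>. restrict \<omega> W)"
    show "cond_indep P X Y W"
      unfolding cond_indep_def
    proof (intro allI)
      fix x y w
      show "pmf_prob P {\<omega>. \<omega> X = x \<and> \<omega> Y = y \<and> (\<forall>v\<in>W. \<omega> v = w v)} * pmf_prob P {\<omega>. \<forall>v\<in>W. \<omega> v = w v} =
          pmf_prob P {\<omega>. \<omega> X = x \<and> (\<forall>v\<in>W. \<omega> v = w v)} * pmf_prob P {\<omega>. \<omega> Y = y \<and> (\<forall>v\<in>W. \<omega> v = w v)}"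
        using H[unfolded indep_given_def, rule_format, of x y "restrict w W"]
        unfolding restrict_eq by simp
    qed
  qed
qed

lemma cond_indep_sym: "cond_indep P X Y W \<Longrightarrow> cond_indep P Y X W"
  unfolding cond_indep_iff_indep_given by (rule indep_given_sym)

context
  fixes P :: "('v \<Rightarrow> 'a) pmf" and p t :: 'v and f :: "'a \<Rightarrow> 'a"
  assumes functional: "\<And>\<omega>. \<omega> \<in> set_pmf P \<Longrightarrow> \<omega> t = f (\<omega> p)"
begin

lemma restrict_insert_child_eq_iff:
  assumes "\<omega> \<in> set_pmf P" "\<omega>' \<in> set_pmf P"
  shows "restrict \<omega> (insert t W) = restrict \<omega>' (insert t W) \<longleftrightarrow>
    (f (\<omega> p), restrict \<omega> W) = (f (\<omega>' p), restrict \<omega>' W)"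
  using assms by (auto simp: fun_eq_iff restrict_def functional)

lemma cond_indep_child_if_parent_given:
  "p \<in> W \<Longrightarrow> cond_indep P t Y W"
  unfolding cond_indep_iff_indep_given
  by (rule indep_given_sym, rule indep_given_determined[where \<phi> = "\<lambda>c. f (c p)"]) (simp add: functional)

lemma cond_indep_child_if_parent:
  assumes "cond_indep P p Y W"
  shows "cond_indep P t Y W"
proof -
  have "indep_given P (\<lambda>\<omega>. \<omega> Y) (\<lambda>\<omega>. f (\<omega> p)) (\<lambda>\<omega>. restrict \<omega> W)"
    using assms unfolding cond_indep_iff_indep_given by (rule indep_given_comp[OF indep_given_sym])
  then show ?thesis
    unfolding cond_indep_iff_indep_given by (rule indep_given_cong[OF indep_given_sym]) (simp_all add: functional)
qed

lemma cond_indep_insert_child: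
  assumes "p \<in> W" "cond_indep P X Y W"
  shows "cond_indep P X Y (insert t W)"
  using assms(2) unfolding cond_indep_iff_indep_given
proof (rule indep_given_cond_cong)
  fix \<omega> \<omega>' assume "\<omega> \<in> set_pmf P" "\<omega>' \<in> set_pmf P"
  then show "restrict \<omega> (insert t W) = restrict \<omega>' (insert t W) \<longleftrightarrow> restrict \<omega> W = restrict \<omega>' W"
    using assms(1) by (auto simp: restrict_insert_child_eq_iff dest: fun_cong[of _ _ p])
qed

lemma cond_indep_parent_insert_child:
  assumes "cond_indep P p Y W"
  shows "cond_indep P p Y (insert t W)"
proof -
  have "indep_given P (\<lambda>\<omega>. \<omega> Y) (\<lambda>\<omega>. (\<omega> p, f (\<omega> p))) (\<lambda>\<omega>. restrict \<omega> W)"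
    using assms unfolding cond_indep_iff_indep_given
    by (rule indep_given_comp[OF indep_given_sym])
  then have "indep_given P (\<lambda>\<omega>. \<omega> p) (\<lambda>\<omega>. \<omega> Y) (\<lambda>\<omega>. (f (\<omega> p), restrict \<omega> W))"
    by (rule indep_given_sym[OF indep_given_weak_union])
  then show ?thesis
    unfolding cond_indep_iff_indep_given
    by (rule indep_given_cond_cong) (simp add: restrict_insert_child_eq_iff)
qed

lemma cond_indep_insert_child_for_parent:
  assumes "cond_indep P X Y (insert p W)" and "cond_indep P X p W"
  shows "cond_indep P X Y (insert t W)"
proof -
  have "indep_given P (\<lambda>\<omega>. \<omega> X) (\<lambda>\<omega>. \<omega> Y) (\<lambda>\<omega>. (\<omega> p, restrict \<omega> W))"
    using assms(1) unfolding cond_indep_iff_indep_given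
    by (rule indep_given_cond_cong) (auto simp: fun_eq_iff restrict_def)
  then have "indep_given P (\<lambda>\<omega>. \<omega> X) (\<lambda>\<omega>. (\<omega> Y, \<omega> p)) (\<lambda>\<omega>. restrict \<omega> W)"
    using assms(2) unfolding cond_indep_iff_indep_given by (rule indep_given_contraction)
  then have "indep_given P (\<lambda>\<omega>. \<omega> X) (\<lambda>\<omega>. (\<omega> Y, f (\<omega> p))) (\<lambda>\<omega>. restrict \<omega> W)"
    using indep_given_comp[where \<psi> = "\<lambda>(y, q). (y, f q)"] by fastforce
  then have "indep_given P (\<lambda>\<omega>. \<omega> X) (\<lambda>\<omega>. \<omega> Y) (\<lambda>\<omega>. (f (\<omega> p), restrict \<omega> W))"
    by (rule indep_given_weak_union)
  then show ?thesis
    unfolding cond_indep_iff_indep_given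
    by (rule indep_given_cond_cong) (simp add: restrict_insert_child_eq_iff)
qed

lemma not_cond_indep_child_parent:
  assumes "\<omega>\<^sub>1 \<in> set_pmf P" "\<omega>\<^sub>2 \<in> set_pmf P" "\<omega>\<^sub>1 t \<noteq> \<omega>\<^sub>2 t"
  shows "\<not> cond_indep P t p {}"
proof
  assume indep: "cond_indep P t p {}"
  let ?x = "\<omega>\<^sub>1 t" and ?y = "\<omega>\<^sub>1 p"
  have "pmf_prob P {\<omega>. \<omega> t = ?x \<and> \<omega> p = ?y} * pmf_prob P UNIV = pmf_prob P {\<omega>. \<omega> t = ?x} * pmf_prob P {\<omega>. \<omega> p = ?y}"
    using indep unfolding cond_indep_def by simp
  moreover have "pmf_prob P {\<omega>. \<omega> t = ?x \<and> \<omega> p = ?y} = pmf_prob P {\<omega>. \<omega> p = ?y}"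
    by (rule pmf_prob_cong_set_pmf) (use assms(1) in \<open>auto simp: functional\<close>)
  moreover have "pmf_prob P {\<omega>. \<omega> p = ?y} > 0"
    by (rule measure_pmf_posI[OF assms(1)]) simp
  ultimately have "pmf_prob P {\<omega>. \<omega> t = ?x} = 1"
    by (simp add: measure_pmf.prob_space)
  then have "pmf_prob P (UNIV - {\<omega>. \<omega> t = ?x}) = 0"
    using measure_pmf.prob_compl[of "{\<omega>. \<omega> t = ?x}" P] by simp
  moreover have "pmf_prob P (UNIV - {\<omega>. \<omega> t = ?x}) > 0"
    by (rule measure_pmf_posI[OF assms(2)]) (use assms(3) in auto)
  ultimately show False by simp
qed

end

section \<open>M-connecting walks\<close>

definition m_open :: "'v mixed_graph \<Rightarrow> 'v set \<Rightarrow> 'v \<Rightarrow> 'v \<Rightarrow> 'v \<Rightarrow> bool" where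
  "m_open G Z a v b \<longleftrightarrow>
     (arrow_into G a v \<and> arrow_into G b v \<longrightarrow> descendants G v \<inter> Z \<noteq> {}) \<and>
     (\<not> (arrow_into G a v \<and> arrow_into G b v) \<longrightarrow> v \<notin> Z)"

definition successively3 :: "('a \<Rightarrow> 'a \<Rightarrow> 'a \<Rightarrow> bool) \<Rightarrow> 'a list \<Rightarrow> bool" where
  "successively3 Q xs \<longleftrightarrow>
     (\<forall>k. 0 < k \<longrightarrow> Suc k < length xs \<longrightarrow> Q (xs ! (k - 1)) (xs ! k) (xs ! Suc k))"

lemma blocked_iff_not_successively3: "blocked G xs Z \<longleftrightarrow> \<not> successively3 (m_open G Z) xs"
  unfolding blocked_def successively3_def is_collider_def m_open_def
  by (auto simp: Suc_lessI less_diff_conv)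

lemma m_separated_iff:
  "m_separated G X Y Z \<longleftrightarrow> \<not> (\<exists>xs. mg_path G X Y xs \<and> successively3 (m_open G Z) xs)"
  unfolding m_separated_def blocked_iff_not_successively3 by blast

lemma adj_commute: "adj G x y \<longleftrightarrow> adj G y x"
  unfolding adj_def by (auto simp: insert_commute)

lemma adj_imp_dir_if_not_arrow_into: "adj G a b \<Longrightarrow> \<not> arrow_into G b a \<Longrightarrow> (a, b) \<in> dir G"
  unfolding adj_def arrow_into_def by (auto simp: insert_commute)

lemma arrow_into_if_dir: "(a, b) \<in> dir G \<Longrightarrow> arrow_into G a b"
  unfolding arrow_into_def by simp

lemma m_open_commute: "m_open G Z a v b \<longleftrightarrow> m_open G Z b v a"
  unfolding m_open_def by auto

lemma successively3_mono:
  assumes "successively3 Q xs"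
    and "\<And>a v b. a \<in> set xs \<Longrightarrow> v \<in> set xs \<Longrightarrow> b \<in> set xs \<Longrightarrow> Q a v b \<Longrightarrow> Q' a v b"
  shows "successively3 Q' xs"
  using assms unfolding successively3_def by (metis Suc_lessD less_imp_diff_less nth_mem)

lemma successively3_rev: "successively3 Q (rev xs) \<longleftrightarrow> successively3 (\<lambda>a v b. Q b v a) xs"
proof -
  let ?n = "length xs"
  have "successively3 Q (rev xs) \<longleftrightarrow> (\<forall>k. 0 < k \<longrightarrow> Suc k < ?n \<longrightarrow>
      Q (xs ! (?n - k)) (xs ! (?n - 1 - k)) (xs ! (?n - 2 - k)))"
    unfolding successively3_def by (auto simp: rev_nth numeral_2_eq_2 Suc_diff_Suc)
  also have "\<dots> \<longleftrightarrow> (\<forall>k. 0 < k \<longrightarrow> Suc k < ?n \<longrightarrow> Q (xs ! Suc k) (xs ! k) (xs ! (k - 1)))"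
  proof (intro iffI allI impI)
    fix k assume k: "0 < k" "Suc k < ?n"
    {
      assume H: "\<forall>k. 0 < k \<longrightarrow> Suc k < ?n \<longrightarrow> Q (xs ! (?n - k)) (xs ! (?n - 1 - k)) (xs ! (?n - 2 - k))"
      have "Q (xs ! (?n - (?n - 1 - k))) (xs ! (?n - 1 - (?n - 1 - k))) (xs ! (?n - 2 - (?n - 1 - k)))"
        by (rule H[rule_format]) (use k in auto)
      moreover have "?n - (?n - 1 - k) = Suc k" "?n - 1 - (?n - 1 - k) = k" "?n - 2 - (?n - 1 - k) = k - 1"
        using k by auto
      ultimately show "Q (xs ! Suc k) (xs ! k) (xs ! (k - 1))" by simp
    next
      assume H: "\<forall>k. 0 < k \<longrightarrow> Suc k < ?n \<longrightarrow> Q (xs ! Suc k) (xs ! k) (xs ! (k - 1))"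
      have "Q (xs ! Suc (?n - 1 - k)) (xs ! (?n - 1 - k)) (xs ! (?n - 1 - k - 1))"
        by (rule H[rule_format]) (use k in auto)
      moreover have "Suc (?n - 1 - k) = ?n - k" "?n - 1 - k - 1 = ?n - 2 - k"
        using k by auto
      ultimately show "Q (xs ! (?n - k)) (xs ! (?n - 1 - k)) (xs ! (?n - 2 - k))" by simp
    }
  qed
  finally show ?thesis unfolding successively3_def .
qed

lemma mg_path_rev: "mg_path G X Y xs \<Longrightarrow> mg_path G Y X (rev xs)"
  unfolding mg_path_def by (auto simp: hd_rev last_rev adj_commute)

lemma successively3_m_open_rev:
  "successively3 (m_open G Z) (rev xs) \<longleftrightarrow> successively3 (m_open G Z) xs"
proof -
  have "(\<lambda>a v b. m_open G Z b v a) = m_open G Z"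
    by (intro ext) (rule m_open_commute)
  then show ?thesis by (simp add: successively3_rev)
qed

lemma m_separated_commute: "m_separated G X Y Z \<Longrightarrow> m_separated G Y X Z"
  unfolding m_separated_iff by (metis mg_path_rev successively3_m_open_rev)

lemma successively_butlast_append:
  assumes "successively R xs" "successively R ys" "xs \<noteq> []" "last xs = hd ys"
  shows "successively R (butlast xs @ ys)"
proof -
  have "successively R (butlast xs @ [last xs])" using assms(1,3) by simp
  then show ?thesis
    using assms(2,4) unfolding successively_append_iff by (cases "ys = []") auto
qed

lemma successively3_butlast_append:
  assumes "successively3 Q xs" "successively3 Q ys" "xs \<noteq> []" "ys \<noteq> []" "last xs = hd ys"
    and junction: "2 \<le> length xs \<Longrightarrow> 2 \<le> length ys \<Longrightarrow> Q (xs ! (length xs - 2)) (hd ys) (ys ! 1)"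
  shows "successively3 Q (butlast xs @ ys)"
  unfolding successively3_def
proof (intro allI impI)
  let ?m = "length xs - 1"
  let ?zs = "butlast xs @ ys"
  fix k assume k0: "0 < k" and k: "Suc k < length ?zs"
  have hd_ys: "hd ys = ys ! 0" "xs ! ?m = ys ! 0"
    using assms(3-5) by (simp_all add: hd_conv_nth last_conv_nth)
  have zs_xs: "?zs ! l = xs ! l" if "l \<le> ?m" "l < length ?zs" for l
    using that hd_ys by (cases "l = ?m") (auto simp: nth_append nth_butlast)
  have zs_ys: "?zs ! l = ys ! (l - ?m)" if "?m \<le> l" "l < length ?zs" for l
    using that hd_ys by (cases "l = ?m") (auto simp: nth_append nth_butlast)
  consider "k < ?m" | "k = ?m" | "?m < k" by linarith
  then show "Q (?zs ! (k - 1)) (?zs ! k) (?zs ! Suc k)"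
  proof cases
    case 1
    then show ?thesis using assms(1) k0 k zs_xs unfolding successively3_def by auto
  next
    case 2
    then have "2 \<le> length xs" "2 \<le> length ys" using k0 k by auto
    moreover have "?zs ! (k - 1) = xs ! (length xs - 2)" "?zs ! k = hd ys" "?zs ! Suc k = ys ! 1"
      using 2 k assms(4) zs_xs[of "k - 1"] zs_ys[of k] zs_ys[of "Suc k"] hd_ys by (auto simp: numeral_2_eq_2)
    ultimately show ?thesis using junction by simp
  next
    case 3
    have "?zs ! (k - 1) = ys ! (k - ?m - 1)" "?zs ! k = ys ! (k - ?m)" "?zs ! Suc k = ys ! Suc (k - ?m)"
      using 3 k zs_ys[of "k - 1"] zs_ys[of k] zs_ys[of "Suc k"] by (auto simp: Suc_diff_le)
    moreover have "0 < k - ?m" "Suc (k - ?m) < length ys" using 3 k by auto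
    ultimately show ?thesis using assms(2) unfolding successively3_def by (metis diff_Suc_1)
  qed
qed

lemma successively_take: "successively R xs \<Longrightarrow> successively R (take n xs)"
  by (simp add: successively_conv_nth)

lemma successively_drop: "successively R xs \<Longrightarrow> successively R (drop n xs)"
  by (simp add: successively_conv_nth add.commute)

lemma successively3_take: "successively3 Q xs \<Longrightarrow> successively3 Q (take n xs)"
  unfolding successively3_def
proof (intro allI impI)
  fix k assume H: "\<forall>k. 0 < k \<longrightarrow> Suc k < length xs \<longrightarrow> Q (xs ! (k - 1)) (xs ! k) (xs ! Suc k)"
    and k: "0 < k" "Suc k < length (take n xs)"
  then show "Q (take n xs ! (k - 1)) (take n xs ! k) (take n xs ! Suc k)"
    by (simp add: less_imp_diff_less)
qed

lemma successively3_drop: "successively3 Q xs \<Longrightarrow> successively3 Q (drop n xs)"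
  unfolding successively3_def
proof (intro allI impI)
  fix k assume H: "\<forall>k. 0 < k \<longrightarrow> Suc k < length xs \<longrightarrow> Q (xs ! (k - 1)) (xs ! k) (xs ! Suc k)"
    and k: "0 < k" "Suc k < length (drop n xs)"
  have "Q (xs ! (n + k - 1)) (xs ! (n + k)) (xs ! Suc (n + k))"
    using H[rule_format, of "n + k"] k by simp
  moreover have "n + k - 1 = n + (k - 1)" using k by simp
  ultimately show "Q (drop n xs ! (k - 1)) (drop n xs ! k) (drop n xs ! Suc k)"
    using k by simp
qed

lemma walk_directed_until_collider:
  assumes walk: "successively (adj G) xs" and out: "(xs ! i, xs ! Suc i) \<in> dir G"
    and "i < m" "m < length xs"
  shows "(\<exists>k. i < k \<and> k \<le> m \<and> is_collider G xs k \<and> (xs ! i, xs ! k) \<in> (dir G)\<^sup>*) \<or>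
    ((xs ! i, xs ! m) \<in> (dir G)\<^sup>* \<and> arrow_into G (xs ! (m - 1)) (xs ! m))"
  using assms(3,4)
proof (induction m)
  case 0
  then show ?case by simp
next
  case (Suc m)
  show ?case
  proof (cases "m = i")
    case True
    then show ?thesis using out by (auto intro: arrow_into_if_dir)
  next
    case False
    with Suc.prems have "i < m" by auto
    with Suc consider "\<exists>k. i < k \<and> k \<le> m \<and> is_collider G xs k \<and> (xs ! i, xs ! k) \<in> (dir G)\<^sup>*"
      | "(xs ! i, xs ! m) \<in> (dir G)\<^sup>*" "arrow_into G (xs ! (m - 1)) (xs ! m)" by fastforce
    then show ?thesis
    proof cases
      case 1
      then show ?thesis using le_SucI by blast
    next
      case 2
      show ?thesis
      proof (cases "is_collider G xs m")
        case True
        then show ?thesis using 2 \<open>i < m\<close> by auto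
      next
        case False
        have "adj G (xs ! m) (xs ! Suc m)" using walk Suc.prems by (auto intro: successively_nth)
        then have "(xs ! m, xs ! Suc m) \<in> dir G"
          using False 2 unfolding is_collider_def by (auto intro: adj_imp_dir_if_not_arrow_into)
        then show ?thesis using 2 by (auto intro: arrow_into_if_dir)
      qed
    qed
  qed
qed

lemma m_open_walk_descendants_meet:
  assumes walk: "successively (adj G) xs" and connecting: "successively3 (m_open G Z) xs"
    and ij: "i < j" "Suc j < length xs"
    and out: "(xs ! i, xs ! Suc i) \<in> dir G" and into: "arrow_into G (xs ! Suc j) (xs ! j)"
  shows "descendants G (xs ! i) \<inter> Z \<noteq> {}"
proof -
  obtain k where k: "i < k" "k \<le> j" "is_collider G xs k" "(xs ! i, xs ! k) \<in> (dir G)\<^sup>*"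
    using walk_directed_until_collider[OF walk out, of j] into ij unfolding is_collider_def by auto
  then have "descendants G (xs ! k) \<inter> Z \<noteq> {}"
    using connecting ij unfolding successively3_def m_open_def is_collider_def by auto
  moreover have "descendants G (xs ! k) \<subseteq> descendants G (xs ! i)"
    using k(4) unfolding descendants_def by (auto intro: rtrancl_trans)
  ultimately show ?thesis by blast
qed

lemma m_open_shortcut_junction:
  assumes walk: "successively (adj G) xs" and connecting: "successively3 (m_open G Z) xs"
    and ij: "0 < i" "i < j" "Suc j < length xs" and eq: "xs ! i = xs ! j"
  shows "m_open G Z (xs ! (i - 1)) (xs ! j) (xs ! Suc j)"
proof -
  have open_i: "m_open G Z (xs ! (i - 1)) (xs ! i) (xs ! Suc i)"
    and open_j: "m_open G Z (xs ! (j - 1)) (xs ! j) (xs ! Suc j)"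
    using connecting ij unfolding successively3_def by auto
  show ?thesis
    unfolding m_open_def
  proof (intro conjI impI)
    assume collider: "arrow_into G (xs ! (i - 1)) (xs ! j) \<and> arrow_into G (xs ! Suc j) (xs ! j)"
    show "descendants G (xs ! j) \<inter> Z \<noteq> {}"
    proof (cases "arrow_into G (xs ! Suc i) (xs ! i)")
      case True
      then show ?thesis using open_i collider eq unfolding m_open_def by auto
    next
      case False
      have "adj G (xs ! i) (xs ! Suc i)" using walk ij by (auto intro: successively_nth)
      then have "(xs ! i, xs ! Suc i) \<in> dir G" using False by (rule adj_imp_dir_if_not_arrow_into)
      with walk connecting ij collider show ?thesis
        using m_open_walk_descendants_meet eq by metis
    qed
  next
    assume "\<not> (arrow_into G (xs ! (i - 1)) (xs ! j) \<and> arrow_into G (xs ! Suc j) (xs ! j))"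
    then show "xs ! j \<notin> Z" using open_i open_j eq unfolding m_open_def by auto
  qed
qed

lemma m_connecting_shortcut:
  assumes walk: "successively (adj G) xs" and connecting: "successively3 (m_open G Z) xs"
    and ij: "i < j" "j < length xs" and eq: "xs ! i = xs ! j"
  shows "successively (adj G) (take i xs @ drop j xs) \<and> successively3 (m_open G Z) (take i xs @ drop j xs)"
proof -
  let ?pre = "take (Suc i) xs" and ?suf = "drop j xs"
  have split: "take i xs @ drop j xs = butlast ?pre @ ?suf"
    using ij by (simp add: butlast_take)
  have ne: "?pre \<noteq> []" "?suf \<noteq> []" and last_pre: "last ?pre = hd ?suf"
    using ij eq by (auto simp: take_Suc_conv_app_nth hd_drop_conv_nth)
  have "successively (adj G) (butlast ?pre @ ?suf)"
    using walk ne last_pre by (intro successively_butlast_append successively_take successively_drop)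
  moreover have "successively3 (m_open G Z) (butlast ?pre @ ?suf)"
  proof (rule successively3_butlast_append)
    assume "2 \<le> length ?pre" "2 \<le> length ?suf"
    then have "0 < i" "Suc j < length xs" by auto
    then have "m_open G Z (xs ! (i - 1)) (xs ! j) (xs ! Suc j)"
      using m_open_shortcut_junction walk connecting ij eq by blast
    then show "m_open G Z (?pre ! (length ?pre - 2)) (hd ?suf) (?suf ! 1)"
      using ij \<open>0 < i\<close> by (simp add: hd_drop_conv_nth numeral_2_eq_2 min_def)
  qed (use connecting ne last_pre in \<open>auto intro: successively3_take successively3_drop\<close>)
  ultimately show ?thesis unfolding split by blast
qed

lemma m_connecting_walk_imp_not_m_separated:
  "successively (adj G) xs \<Longrightarrow> successively3 (m_open G Z) xs \<Longrightarrow> xs \<noteq> [] \<Longrightarrow> hd xs \<noteq> last xs \<Longrightarrow>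
    \<not> m_separated G (hd xs) (last xs) Z"
proof (induction "length xs" arbitrary: xs rule: less_induct)
  case less
  show ?case
  proof (cases "distinct xs")
    case True
    have "length xs \<noteq> 1" using less.prems by (auto simp: length_Suc_conv)
    then have "2 \<le> length xs" using less.prems by (cases xs) (auto simp: Suc_le_eq)
    then show ?thesis using True less.prems unfolding m_separated_iff mg_path_def by blast
  next
    case False
    then obtain i j where ij: "i < j" "j < length xs" "xs ! i = xs ! j"
      unfolding distinct_conv_nth by (metis linorder_neqE_nat)
    let ?ys = "take i xs @ drop j xs"
    have "length ?ys < length xs" "?ys \<noteq> []" "last ?ys = last xs" using ij by auto
    moreover have "hd ?ys = hd xs"
      using ij less.prems(3) by (cases "i = 0") (simp_all add: hd_drop_conv_nth hd_conv_nth hd_append hd_take)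
    ultimately show ?thesis
      using less.hyps m_connecting_shortcut[OF less.prems(1,2) ij] less.prems(4) by metis
  qed
qed

lemma adj_imp_not_m_separated:
  assumes "adj G x y" "x \<noteq> y"
  shows "\<not> m_separated G x y Z"
proof -
  have "mg_path G x y [x, y] \<and> successively3 (m_open G Z) [x, y]"
    using assms unfolding mg_path_def successively3_def by auto
  then show "\<not> m_separated G x y Z" unfolding m_separated_iff by blast
qed

lemma adj_in_vertices: "is_MAG U G \<Longrightarrow> adj G x y \<Longrightarrow> x \<in> U \<and> y \<in> U"
  unfolding is_MAG_def adj_def by (auto simp: doubleton_eq_iff)

lemma set_walk_subset:
  assumes "\<And>x y. adj G x y \<Longrightarrow> x \<in> U \<and> y \<in> U" "successively (adj G) xs" "2 \<le> length xs"
  shows "set xs \<subseteq> U"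
proof
  fix x assume "x \<in> set xs"
  then obtain k where k: "k < length xs" "xs ! k = x" by (auto simp: in_set_conv_nth)
  show "x \<in> U"
  proof (cases "Suc k < length xs")
    case True
    then show ?thesis using assms(1,2) k by (metis successively_nth)
  next
    case False
    then have "Suc (k - 1) < length xs" "xs ! Suc (k - 1) = x" using k assms(3) by auto
    then show ?thesis using assms(1,2) by (metis successively_nth)
  qed
qed

lemma pendant_notin_path:
  assumes pendant: "\<And>z. adj G t z \<Longrightarrow> z = p"
    and walk: "successively (adj G) xs" and "distinct xs" "xs \<noteq> []" "hd xs \<noteq> t" "last xs \<noteq> t"
  shows "t \<notin> set xs"
proof
  assume "t \<in> set xs"
  then obtain k where k: "k < length xs" "xs ! k = t" by (auto simp: in_set_conv_nth)
  have "k \<noteq> 0" using assms(4,5) k by (cases k) (auto simp: hd_conv_nth)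
  moreover have "Suc k < length xs" using assms(4,6) k by (metis Suc_lessI diff_Suc_1 last_conv_nth)
  ultimately have "xs ! (k - 1) = p" "xs ! Suc k = p"
    using walk k pendant adj_commute by (metis Suc_diff_1 Suc_lessD bot_nat_0.not_eq_extremum successively_nth)+
  moreover have "k - 1 \<noteq> Suc k" "k - 1 < length xs" using \<open>Suc k < length xs\<close> by auto
  ultimately show False using assms(3) \<open>Suc k < length xs\<close> unfolding distinct_conv_nth by metis
qed

section \<open>Adding a pendant vertex\<close>

definition add_edge :: "'v mixed_graph \<Rightarrow> 'v \<Rightarrow> 'v \<Rightarrow> 'v mixed_graph" where
  "add_edge G p t = (insert (p, t) (dir G), bid G)"

lemma dir_add_edge [simp]: "dir (add_edge G p t) = insert (p, t) (dir G)"
  and bid_add_edge [simp]: "bid (add_edge G p t) = bid G"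
  unfolding add_edge_def dir_def bid_def by simp_all

lemma adj_add_edge: "adj (add_edge G p t) x y \<longleftrightarrow> adj G x y \<or> (x = p \<and> y = t) \<or> (x = t \<and> y = p)"
  unfolding adj_def by auto

lemma arrow_into_add_edge: "arrow_into (add_edge G p t) a b \<longleftrightarrow> arrow_into G a b \<or> (a = p \<and> b = t)"
  unfolding arrow_into_def by auto

lemma descendants_add_edge_mono: "descendants G v \<subseteq> descendants (add_edge G p t) v"
  unfolding descendants_def by (auto intro: rtrancl_mono[THEN subsetD])

lemma successively_adj_add_edge: "successively (adj G) xs \<Longrightarrow> successively (adj (add_edge G p t)) xs"
  by (erule successively_mono) (auto simp: adj_add_edge)

lemma skeleton_add_edge: "skeleton (add_edge G p t) = insert {p, t} (skeleton G)"
  unfolding skeleton_def adj_add_edge by (auto simp: insert_commute)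

context
  fixes G :: "'v mixed_graph" and U :: "'v set" and p t :: 'v
  assumes MAG: "is_MAG U G" and t_notin: "t \<notin> U" and p_in: "p \<in> U"
begin

lemma dir_in_vertices: "(x, y) \<in> dir G \<Longrightarrow> x \<in> U \<and> y \<in> U"
  using MAG unfolding is_MAG_def by auto

lemma bid_in_vertices: "{x, y} \<in> bid G \<Longrightarrow> x \<in> U \<and> y \<in> U"
  using MAG unfolding is_MAG_def by (auto simp: doubleton_eq_iff)

lemma arrow_into_add_edge_old: "b \<in> U \<Longrightarrow> arrow_into (add_edge G p t) a b \<longleftrightarrow> arrow_into G a b"
  unfolding arrow_into_add_edge using t_notin by auto

lemma not_arrow_into_parent: "\<not> arrow_into (add_edge G p t) t p"
  unfolding arrow_into_add_edge arrow_into_def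
  using p_in t_notin dir_in_vertices bid_in_vertices by (auto simp: insert_commute)

lemma adj_add_edge_pendant: "adj (add_edge G p t) t z \<Longrightarrow> z = p"
  unfolding adj_add_edge using adj_in_vertices[OF MAG] t_notin by auto

lemma rtrancl_from_pendant: "(t, y) \<in> (dir G)\<^sup>* \<Longrightarrow> y = t"
  by (erule converse_rtranclE) (auto dest: dir_in_vertices simp: t_notin)

lemma descendants_add_edge: "descendants (add_edge G p t) v \<subseteq> insert t (descendants G v)"
  unfolding descendants_def dir_add_edge rtrancl_insert by (auto dest: rtrancl_from_pendant)

lemma descendants_add_edge_parent: "p \<in> descendants G v \<Longrightarrow> t \<in> descendants (add_edge G p t) v"
  unfolding descendants_def dir_add_edge by (auto simp: rtrancl_insert)

lemma successively3_m_open_add_edge: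
  assumes "successively3 (m_open G Z) xs" "set xs \<subseteq> U"
    and "\<And>v. v \<in> U \<Longrightarrow> descendants G v \<inter> Z \<noteq> {} \<Longrightarrow> descendants (add_edge G p t) v \<inter> Z' \<noteq> {}"
    and "\<And>v. v \<in> U \<Longrightarrow> v \<notin> Z \<Longrightarrow> v \<notin> Z'"
  shows "successively3 (m_open (add_edge G p t) Z') xs"
  using assms(1)
proof (rule successively3_mono)
  fix a v b assume "a \<in> set xs" "v \<in> set xs" "b \<in> set xs" "m_open G Z a v b"
  with assms(2-4) show "m_open (add_edge G p t) Z' a v b"
    unfolding m_open_def by (simp add: subset_iff arrow_into_add_edge_old)
qed

lemma m_separated_remove_edge:
  assumes "m_separated (add_edge G p t) X Y Z'"
    and "\<And>v. v \<in> U \<Longrightarrow> descendants G v \<inter> Z \<noteq> {} \<Longrightarrow> descendants (add_edge G p t) v \<inter> Z' \<noteq> {}"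
    and "\<And>v. v \<in> U \<Longrightarrow> v \<notin> Z \<Longrightarrow> v \<notin> Z'"
  shows "m_separated G X Y Z"
  unfolding m_separated_iff
proof
  assume "\<exists>xs. mg_path G X Y xs \<and> successively3 (m_open G Z) xs"
  then obtain xs where path: "mg_path G X Y xs" and "successively3 (m_open G Z) xs" by blast
  moreover have "set xs \<subseteq> U"
    using path set_walk_subset[OF adj_in_vertices[OF MAG]] unfolding mg_path_def by blast
  ultimately have "successively3 (m_open (add_edge G p t) Z') xs"
    using assms(2,3) by (intro successively3_m_open_add_edge)
  moreover have "mg_path (add_edge G p t) X Y xs"
    using path unfolding mg_path_def by (auto intro: successively_adj_add_edge)
  ultimately show False using assms(1) unfolding m_separated_iff by blast
qed

lemma m_separated_add_edge:
  assumes "m_separated G X Y W" "W \<subseteq> U" "X \<in> U" "Y \<in> U"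
  shows "m_separated (add_edge G p t) X Y W"
  unfolding m_separated_iff
proof
  assume "\<exists>xs. mg_path (add_edge G p t) X Y xs \<and> successively3 (m_open (add_edge G p t) W) xs"
  then obtain xs where path: "mg_path (add_edge G p t) X Y xs"
    and connecting: "successively3 (m_open (add_edge G p t) W) xs" by blast
  have "t \<notin> set xs"
    using pendant_notin_path[OF adj_add_edge_pendant] path assms(3,4) t_notin
    unfolding mg_path_def by (metis list.size(3) not_numeral_le_zero)
  then have path_G: "mg_path G X Y xs"
    using path unfolding mg_path_def adj_add_edge successively_conv_nth by (metis Suc_lessD nth_mem)
  then have "set xs \<subseteq> U"
    using set_walk_subset[OF adj_in_vertices[OF MAG]] unfolding mg_path_def by blast
  have "successively3 (m_open G W) xs"
    using connecting
  proof (rule successively3_mono)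
    fix a v b assume "a \<in> set xs" "v \<in> set xs" "b \<in> set xs" "m_open (add_edge G p t) W a v b"
    then show "m_open G W a v b"
      using \<open>set xs \<subseteq> U\<close> descendants_add_edge[of v] assms(2) t_notin
      unfolding m_open_def by (auto simp: arrow_into_add_edge_old)
  qed
  with path_G assms(1) show False unfolding m_separated_iff by blast
qed

lemma m_separated_pendant:
  assumes "y \<in> U" "y \<noteq> p"
  shows "m_separated (add_edge G p t) t y {p}"
  unfolding m_separated_def
proof (intro allI impI)
  fix xs assume path: "mg_path (add_edge G p t) t y xs"
  then have "xs ! 0 = t" "2 \<le> length xs" unfolding mg_path_def by (cases xs; auto)+
  moreover from this have "xs ! 1 = p"
    using path adj_add_edge_pendant unfolding mg_path_def by (metis One_nat_def Suc_1 Suc_le_lessD successively_nth)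
  moreover have "2 < length xs"
    using path \<open>2 \<le> length xs\<close> \<open>xs ! 1 = p\<close> assms(2) unfolding mg_path_def
    by (metis One_nat_def diff_Suc_1 last_conv_nth le_neq_implies_less list.size(3) not_numeral_le_zero numeral_2_eq_2)
  ultimately show "blocked (add_edge G p t) xs {p}"
    unfolding blocked_def is_collider_def using not_arrow_into_parent
    by (intro exI[of _ 1]) auto
qed

lemma is_MAG_add_edge: "is_MAG (insert t U) (add_edge G p t)"
  unfolding is_MAG_def
proof (intro conjI allI ballI impI)
  have "(t, p) \<notin> (dir G)\<^sup>*" using rtrancl_from_pendant p_in t_notin by blast
  then show "acyclic (dir (add_edge G p t))" using MAG unfolding is_MAG_def by simp
next
  fix x y assume "x \<in> insert t U" "y \<in> insert t U" "x \<noteq> y \<and> \<not> adj (add_edge G p t) x y"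
  then consider "x \<in> U" "y \<in> U" "\<not> adj G x y" | "x = t" "y \<in> U" "y \<noteq> p" | "x \<in> U" "y = t" "x \<noteq> p"
    unfolding adj_add_edge by auto
  then show "\<exists>W \<subseteq> insert t U - {x, y}. m_separated (add_edge G p t) x y W"
  proof cases
    case 1
    then obtain W where W: "W \<subseteq> U - {x, y}" "m_separated G x y W"
      using MAG \<open>x \<noteq> y \<and> _\<close> unfolding is_MAG_def by blast
    then have "m_separated (add_edge G p t) x y W" using 1 by (intro m_separated_add_edge) auto
    with W show ?thesis by (intro exI[of _ W]) auto
  next
    case 2
    then show ?thesis using m_separated_pendant[of y] p_in t_notin by (intro exI[of _ "{p}"]) auto
  next
    case 3
    then show ?thesis
      using m_separated_commute[OF m_separated_pendant[of x]] p_in t_notin by (intro exI[of _ "{p}"]) auto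
  qed
next
  fix x z assume bid: "{x, z} \<in> bid (add_edge G p t)"
  then have "(x, z) \<notin> (dir G)\<^sup>+" using MAG unfolding is_MAG_def by simp
  moreover have "z \<noteq> t" using bid bid_in_vertices t_notin by auto
  ultimately show "(x, z) \<notin> (dir (add_edge G p t))\<^sup>+"
    unfolding dir_add_edge trancl_insert using rtrancl_from_pendant by blast
next
  fix x y assume "(x, y) \<in> dir (add_edge G p t)"
  then show "(y, x) \<notin> dir (add_edge G p t)" "{x, y} \<notin> bid (add_edge G p t)"
    using MAG dir_in_vertices bid_in_vertices p_in t_notin unfolding is_MAG_def by auto
next
  fix e assume "e \<in> bid (add_edge G p t)"
  then obtain x y where "e = {x, y}" "x \<noteq> y" "x \<in> U" "y \<in> U" using MAG unfolding is_MAG_def by auto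
  then show "\<exists>x y. e = {x, y} \<and> x \<noteq> y \<and> x \<in> insert t U \<and> y \<in> insert t U" by blast
qed (use MAG p_in t_notin in \<open>auto simp: is_MAG_def\<close>)

lemma successively3_m_open_add_edge_superset:
  assumes "successively3 (m_open G Z) xs" "set xs \<subseteq> U" "Z \<subseteq> Z'" "Z' \<inter> U \<subseteq> Z"
  shows "successively3 (m_open (add_edge G p t) Z') xs"
  using assms(1,2)
proof (rule successively3_m_open_add_edge)
  fix v assume "descendants G v \<inter> Z \<noteq> {}"
  then show "descendants (add_edge G p t) v \<inter> Z' \<noteq> {}"
    using descendants_add_edge_mono[of G v p t] assms(3) by blast
qed (use assms(4) in blast)

lemma m_separated_parent_if_pendant:
  assumes sep: "m_separated (add_edge G p t) t Y W" and "W \<subseteq> U" "p \<notin> W"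
  shows "m_separated G p Y W"
  unfolding m_separated_iff
proof
  assume "\<exists>xs. mg_path G p Y xs \<and> successively3 (m_open G W) xs"
  then obtain xs where path: "mg_path G p Y xs" and connecting: "successively3 (m_open G W) xs"
    by blast
  then have walk: "successively (adj G) xs" and xs: "2 \<le> length xs" "hd xs = p"
    unfolding mg_path_def by auto
  have "set xs \<subseteq> U" using set_walk_subset[OF adj_in_vertices[OF MAG] walk xs(1)] .
  then have "successively3 (m_open (add_edge G p t) W) xs"
    using connecting by (intro successively3_m_open_add_edge_superset) auto
  moreover have "m_open (add_edge G p t) W t p (xs ! 1)"
    unfolding m_open_def using not_arrow_into_parent assms(3) by auto
  ultimately have "successively3 (m_open (add_edge G p t) W) (butlast [t, p] @ xs)"
    using xs by (intro successively3_butlast_append) (auto simp: successively3_def)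
  moreover have "mg_path (add_edge G p t) t Y (t # xs)"
    using path \<open>set xs \<subseteq> U\<close> t_notin xs successively_adj_add_edge[OF walk]
    unfolding mg_path_def by (auto simp: adj_add_edge successively_Cons)
  ultimately show False using sep unfolding m_separated_iff by auto
qed

text \<open>Conditioning on \<open>t\<close> opens \<open>p\<close> both as a collider and as a non-collider, so m-connecting
  paths from \<open>X\<close> and from \<open>Y\<close> to \<open>p\<close> would join into an m-connecting walk from \<open>X\<close> to \<open>Y\<close>.\<close>

lemma m_separated_parent_either:
  assumes sep: "m_separated (add_edge G p t) X Y (insert t W)"
    and "X \<noteq> Y" "W \<subseteq> U" "p \<notin> W"
  shows "m_separated G X p W \<or> m_separated G Y p W"
proof (rule ccontr)
  assume "\<not> (m_separated G X p W \<or> m_separated G Y p W)"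
  then obtain xs ys where
    xs: "mg_path G X p xs" "successively3 (m_open G W) xs" and
    ys: "mg_path G p Y ys" "successively3 (m_open G W) ys"
    unfolding m_separated_iff by (metis mg_path_rev successively3_m_open_rev)
  let ?G' = "add_edge G p t" and ?W' = "insert t W"
  have lift: "successively (adj ?G') zs \<and> successively3 (m_open ?G' ?W') zs"
    if "mg_path G a b zs" "successively3 (m_open G W) zs" for a b zs
  proof
    show "successively (adj ?G') zs"
      using that unfolding mg_path_def by (auto intro: successively_adj_add_edge)
    have "set zs \<subseteq> U" using that set_walk_subset[OF adj_in_vertices[OF MAG]] unfolding mg_path_def by blast
    then show "successively3 (m_open ?G' ?W') zs"
      using that(2) t_notin by (intro successively3_m_open_add_edge_superset) auto
  qed
  have "t \<in> descendants ?G' p" by (rule descendants_add_edge_parent) (simp add: descendants_def)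
  moreover have "p \<notin> ?W'" using assms(4) p_in t_notin by auto
  ultimately have junction: "m_open ?G' ?W' a p b" for a b unfolding m_open_def by auto
  have "hd ys = p" "last xs = p" "xs \<noteq> []" "ys \<noteq> []" using xs ys unfolding mg_path_def by auto
  then have "successively (adj ?G') (butlast xs @ ys)" "successively3 (m_open ?G' ?W') (butlast xs @ ys)"
    using lift[OF xs] lift[OF ys] junction
    by (auto intro: successively_butlast_append successively3_butlast_append)
  moreover have "hd (butlast xs @ ys) = X" "last (butlast xs @ ys) = Y"
  proof -
    have "butlast xs \<noteq> []" using xs unfolding mg_path_def by (cases xs) auto
    then show "hd (butlast xs @ ys) = X"
      using xs \<open>xs \<noteq> []\<close> unfolding mg_path_def by (metis append_butlast_last_id hd_append2)
    show "last (butlast xs @ ys) = Y" using ys \<open>ys \<noteq> []\<close> unfolding mg_path_def by auto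
  qed
  moreover have "butlast xs @ ys \<noteq> []" using \<open>ys \<noteq> []\<close> by simp
  ultimately show False
    using m_connecting_walk_imp_not_m_separated[of ?G' "butlast xs @ ys" ?W'] sep assms(2) by simp
qed

context
  fixes P :: "('v \<Rightarrow> 'a) pmf" and f :: "'a \<Rightarrow> 'a"
  assumes functional: "\<And>\<omega>. \<omega> \<in> set_pmf P \<Longrightarrow> \<omega> t = f (\<omega> p)"
    and GMP: "GMP P U G"
begin

lemma cond_indep_if_m_separated:
  "X \<in> U \<Longrightarrow> Y \<in> U \<Longrightarrow> X \<noteq> Y \<Longrightarrow> W \<subseteq> U - {X, Y} \<Longrightarrow> m_separated G X Y W \<Longrightarrow> cond_indep P X Y W"
  using GMP unfolding GMP_def by blast

lemma cond_indep_pendant: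
  assumes "Y \<in> U" "W \<subseteq> U - {Y}" and sep: "m_separated (add_edge G p t) t Y W"
  shows "cond_indep P t Y W"
proof -
  consider "p \<in> W" | "p = Y" | "p \<notin> W" "p \<noteq> Y" by blast
  then show ?thesis
  proof cases
    case 1
    with functional show ?thesis by (rule cond_indep_child_if_parent_given)
  next
    case 2
    have "adj (add_edge G p t) t p" "t \<noteq> p" using p_in t_notin by (auto simp: adj_add_edge)
    then have "\<not> m_separated (add_edge G p t) t Y W" unfolding 2 by (rule adj_imp_not_m_separated)
    with sep show ?thesis by contradiction
  next
    case 3
    then have "m_separated G p Y W" using sep assms(2) by (intro m_separated_parent_if_pendant) auto
    then have "cond_indep P p Y W" using 3 assms p_in by (intro cond_indep_if_m_separated) auto
    with functional show ?thesis by (rule cond_indep_child_if_parent)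
  qed
qed


lemma cond_indep_insert_pendant:
  assumes "X \<in> U" "Y \<in> U" "X \<noteq> Y" "W \<subseteq> U - {X, Y}"
    and sep: "m_separated (add_edge G p t) X Y (insert t W)"
  shows "cond_indep P X Y (insert t W)"
proof -
  have "m_separated G X Y W"
  proof (rule m_separated_remove_edge[OF sep])
    fix v assume "descendants G v \<inter> W \<noteq> {}"
    then show "descendants (add_edge G p t) v \<inter> insert t W \<noteq> {}"
      using descendants_add_edge_mono[of G v p t] by blast
  qed (use t_notin in blast)
  then have indep: "cond_indep P X Y W" using assms by (intro cond_indep_if_m_separated)
  consider "p \<in> W" | "p = X" | "p = Y" | "p \<notin> W" "p \<noteq> X" "p \<noteq> Y" by blast
  then show ?thesis
  proof cases
    case 1
    with functional show ?thesis using indep by (rule cond_indep_insert_child)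
  next
    case 2
    with functional show ?thesis using indep by (metis cond_indep_parent_insert_child)
  next
    case 3
    with functional show ?thesis using indep by (metis cond_indep_parent_insert_child cond_indep_sym)
  next
    case 4
    have "m_separated G X Y (insert p W)"
    proof (rule m_separated_remove_edge[OF sep])
      fix v assume "descendants G v \<inter> insert p W \<noteq> {}"
      then show "descendants (add_edge G p t) v \<inter> insert t W \<noteq> {}"
        using descendants_add_edge_mono[of G v p t] descendants_add_edge_parent[of v] by blast
    qed (use t_notin in blast)
    then have indep_p: "cond_indep P X Y (insert p W)"
      using assms 4 p_in by (intro cond_indep_if_m_separated) auto
    from sep assms(3,4) 4(1) consider "m_separated G X p W" | "m_separated G Y p W"
      by (metis m_separated_parent_either Diff_subset subset_trans)
    then show ?thesis
    proof cases
      case 1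
      then have "cond_indep P X p W" using assms 4 p_in by (intro cond_indep_if_m_separated) auto
      with functional indep_p show ?thesis by (rule cond_indep_insert_child_for_parent)
    next
      case 2
      then have "cond_indep P Y p W" using assms 4 p_in by (intro cond_indep_if_m_separated) auto
      with functional cond_indep_sym[OF indep_p] have "cond_indep P Y X (insert t W)"
        by (rule cond_indep_insert_child_for_parent)
      then show ?thesis by (rule cond_indep_sym)
    qed
  qed
qed

lemma GMP_add_edge: "GMP P (insert t U) (add_edge G p t)"
  unfolding GMP_def
proof (intro ballI allI impI)
  fix X Y W assume "X \<in> insert t U" "Y \<in> insert t U"
    and H: "X \<noteq> Y \<and> W \<subseteq> insert t U - {X, Y} \<and> m_separated (add_edge G p t) X Y W"
  consider "X = t" "Y \<in> U" | "Y = t" "X \<in> U" | "X \<in> U" "Y \<in> U" "t \<notin> W" | "X \<in> U" "Y \<in> U" "t \<in> W"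
    using \<open>X \<in> insert t U\<close> \<open>Y \<in> insert t U\<close> H by blast
  then show "cond_indep P X Y W"
  proof cases
    case 1
    then have "cond_indep P t Y W" using H by (intro cond_indep_pendant) auto
    then show ?thesis using 1 by simp
  next
    case 2
    then have "m_separated (add_edge G p t) t X W" using H by (auto intro: m_separated_commute)
    then have "cond_indep P t X W" using 2 H by (intro cond_indep_pendant) auto
    then show ?thesis using 2 by (simp add: cond_indep_sym)
  next
    case 3
    have "m_separated G X Y W"
    proof (rule m_separated_remove_edge)
      fix v assume "descendants G v \<inter> W \<noteq> {}"
      then show "descendants (add_edge G p t) v \<inter> W \<noteq> {}"
        using descendants_add_edge_mono[of G v p t] by blast
    qed (use H in blast)+
    then show ?thesis using 3 H by (intro cond_indep_if_m_separated) auto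
  next
    case 4
    then have "W = insert t (W - {t})" by blast
    then show ?thesis using 4 H cond_indep_insert_pendant[of X Y "W - {t}"] by auto
  qed
qed
end

end

section \<open>Induced subgraphs\<close>

definition induced :: "'v mixed_graph \<Rightarrow> 'v set \<Rightarrow> 'v mixed_graph" where
  "induced G U = (dir G \<inter> U \<times> U, {e \<in> bid G. e \<subseteq> U})"

lemma dir_induced [simp]: "dir (induced G U) = dir G \<inter> U \<times> U"
  and bid_induced [simp]: "bid (induced G U) = {e \<in> bid G. e \<subseteq> U}"
  unfolding induced_def dir_def bid_def by simp_all

lemma adj_induced: "adj (induced G U) x y \<longleftrightarrow> adj G x y \<and> x \<in> U \<and> y \<in> U"
  unfolding adj_def by auto

lemma arrow_into_induced: "a \<in> U \<Longrightarrow> b \<in> U \<Longrightarrow> arrow_into (induced G U) a b \<longleftrightarrow> arrow_into G a b"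
  unfolding arrow_into_def by auto

lemma descendants_induced_subset: "descendants (induced G U) v \<subseteq> descendants G v"
  unfolding descendants_def by (auto intro: rtrancl_mono[THEN subsetD])

lemma rtrancl_Int_Times_outside: "(x, y) \<in> (r \<inter> U \<times> U)\<^sup>* \<Longrightarrow> x \<notin> U \<or> y \<notin> U \<Longrightarrow> x = y"
  by (induction rule: rtrancl_induct) auto

lemma mg_path_induced: "mg_path (induced G U) x y xs \<longleftrightarrow> mg_path G x y xs \<and> set xs \<subseteq> U"
proof -
  have "successively (adj (induced G U)) xs \<longleftrightarrow> successively (adj G) xs \<and> set xs \<subseteq> U"
    if "2 \<le> length xs" for xs
    using that
  proof (induction xs rule: induct_list012)
    case (3 x y zs)
    then show ?case by (cases zs) (auto simp: adj_induced)
  qed simp_all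
  then show ?thesis unfolding mg_path_def by blast
qed

text \<open>Shrinking the separating set to the vertices of \<open>U\<close> with a descendant in it keeps the
  conditioning status of every collider and non-collider inside \<open>U\<close>.\<close>

lemma m_separated_induced:
  assumes sep: "m_separated G x y W" and "W \<subseteq> V - {x, y}"
  shows "m_separated (induced G U) x y {c \<in> U - {x, y}. descendants G c \<inter> W \<noteq> {}}"
    (is "m_separated _ x y ?W'")
  unfolding m_separated_iff
proof
  assume "\<exists>xs. mg_path (induced G U) x y xs \<and> successively3 (m_open (induced G U) ?W') xs"
  then obtain xs where path: "mg_path G x y xs" "set xs \<subseteq> U"
    and connecting: "successively3 (m_open (induced G U) ?W') xs"
    unfolding mg_path_induced by blast
  have "successively3 (m_open G W) xs"
    using connecting
  proof (rule successively3_mono)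
    fix a v b assume in_U: "a \<in> set xs" "v \<in> set xs" "b \<in> set xs"
      and "m_open (induced G U) ?W' a v b"
    moreover have "descendants G v \<inter> W \<noteq> {}" if "descendants (induced G U) v \<inter> ?W' \<noteq> {}"
      using that descendants_induced_subset[of G U v] unfolding descendants_def
      by (blast intro: rtrancl_trans)
    moreover have "v \<in> ?W'" if "v \<in> W"
      using that in_U path(2) assms(2) by (auto simp: descendants_def)
    moreover have "a \<in> U" "v \<in> U" "b \<in> U" using in_U path(2) by auto
    ultimately show "m_open G W a v b" unfolding m_open_def by (auto simp: arrow_into_induced)
  qed
  with path(1) sep show False unfolding m_separated_iff by blast
qed

lemma is_MAG_induced:
  assumes MAG: "is_MAG V G" and "U \<subseteq> V"
  shows "is_MAG U (induced G U)"
  unfolding is_MAG_def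
proof (intro conjI allI ballI impI)
  show "acyclic (dir (induced G U))" using MAG unfolding is_MAG_def by (auto intro: acyclic_subset)
next
  fix x z assume "{x, z} \<in> bid (induced G U)"
  then have "(x, z) \<notin> (dir G)\<^sup>+" using MAG unfolding is_MAG_def by simp
  then show "(x, z) \<notin> (dir (induced G U))\<^sup>+"
    using trancl_mono[of "(x, z)" "dir (induced G U)" "dir G"] by auto
next
  fix x y assume "x \<in> U" "y \<in> U" "x \<noteq> y \<and> \<not> adj (induced G U) x y"
  then obtain W where "W \<subseteq> V - {x, y}" "m_separated G x y W"
    using MAG assms(2) unfolding is_MAG_def adj_induced by blast
  then show "\<exists>W \<subseteq> U - {x, y}. m_separated (induced G U) x y W"
    by (intro exI[of _ "{c \<in> U - {x, y}. descendants G c \<inter> W \<noteq> {}}"] conjI m_separated_induced) auto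
next
  fix e assume "e \<in> bid (induced G U)"
  then obtain x y where "e = {x, y}" "x \<noteq> y" "e \<subseteq> U" using MAG unfolding is_MAG_def by auto
  then show "\<exists>x y. e = {x, y} \<and> x \<noteq> y \<and> x \<in> U \<and> y \<in> U" by blast
qed (use MAG in \<open>auto simp: is_MAG_def\<close>)

context
  fixes G :: "'v mixed_graph" and U :: "'v set" and p t :: 'v
  assumes MAG: "is_MAG (insert t U) G" and t_notin: "t \<notin> U" and p_in: "p \<in> U"
    and pendant: "\<And>z. adj G t z \<Longrightarrow> z = p"
begin

lemma dir_subset_induced_pendant: "\<exists>e \<in> {(p, t), (t, p)}. dir G \<subseteq> insert e (dir G \<inter> U \<times> U)"
proof -
  have edge: "(a, b) = (p, t) \<or> (a, b) = (t, p) \<or> (a, b) \<in> U \<times> U" if "(a, b) \<in> dir G" for a b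
  proof -
    have "adj G a b" using that unfolding adj_def by auto
    then show ?thesis using adj_in_vertices[OF MAG] pendant adj_commute[of G a b] by blast
  qed
  have "(p, t) \<notin> dir G \<or> (t, p) \<notin> dir G"
    using MAG unfolding is_MAG_def by (cases "(p, t) \<in> dir G") simp_all
  then show ?thesis
  proof
    assume "(p, t) \<notin> dir G"
    then have "dir G \<subseteq> insert (t, p) (dir G \<inter> U \<times> U)" using edge by auto
    then show ?thesis by blast
  next
    assume "(t, p) \<notin> dir G"
    then have "dir G \<subseteq> insert (p, t) (dir G \<inter> U \<times> U)" using edge by auto
    then show ?thesis by blast
  qed
qed

lemma rtrancl_induced_pendant:
  assumes "(v, d) \<in> (dir G)\<^sup>*" "v \<in> U" "d \<in> U"
  shows "(v, d) \<in> (dir (induced G U))\<^sup>*"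
proof -
  let ?r = "dir G \<inter> U \<times> U"
  obtain e where e: "e \<in> {(p, t), (t, p)}" and "dir G \<subseteq> insert e ?r"
    using dir_subset_induced_pendant by blast
  then have "(v, d) \<in> (insert e ?r)\<^sup>*" using assms(1) rtrancl_mono by blast
  then have "(v, d) \<in> ?r\<^sup>* \<or> (v, fst e) \<in> ?r\<^sup>* \<and> (snd e, d) \<in> ?r\<^sup>*"
    by (metis prod.collapse rtrancl_insert UnE mem_Collect_eq case_prodD)
  moreover have "\<not> ((v, fst e) \<in> ?r\<^sup>* \<and> (snd e, d) \<in> ?r\<^sup>*)"
    using e assms(2,3) t_notin rtrancl_Int_Times_outside by fastforce
  ultimately show ?thesis by simp
qed

lemma descendants_induced_pendant:
  "v \<in> U \<Longrightarrow> descendants G v \<inter> U \<subseteq> descendants (induced G U) v"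
  unfolding descendants_def using rtrancl_induced_pendant by auto


lemma skeleton_induced_pendant: "skeleton (induced G U) = skeleton G - {{p, t}}"
proof -
  have "adj G x y \<and> x \<in> U \<and> y \<in> U \<longleftrightarrow> adj G x y \<and> {x, y} \<noteq> {p, t}" for x y
    using adj_in_vertices[OF MAG, of x y] pendant[of x] pendant[of y] adj_commute[of G x y] t_notin p_in
    by (auto simp: doubleton_eq_iff)
  then show ?thesis unfolding skeleton_def adj_induced by blast
qed

lemma GMP_induced_pendant:
  assumes GMP: "GMP P (insert t U) G"
  shows "GMP P U (induced G U)"
  unfolding GMP_def
proof (intro ballI allI impI)
  fix X Y W assume XY: "X \<in> U" "Y \<in> U" and H: "X \<noteq> Y \<and> W \<subseteq> U - {X, Y} \<and> m_separated (induced G U) X Y W"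
  have "m_separated G X Y W"
    unfolding m_separated_iff
  proof
    assume "\<exists>xs. mg_path G X Y xs \<and> successively3 (m_open G W) xs"
    then obtain xs where path: "mg_path G X Y xs" and connecting: "successively3 (m_open G W) xs"
      by blast
    have "xs \<noteq> []" "hd xs \<noteq> t" "last xs \<noteq> t" using path XY t_notin unfolding mg_path_def by auto
    then have "t \<notin> set xs" using pendant_notin_path[of G t p xs] pendant path unfolding mg_path_def by blast
    then have "set xs \<subseteq> U"
      using set_walk_subset[OF adj_in_vertices[OF MAG]] path unfolding mg_path_def by blast
    have "successively3 (m_open (induced G U) W) xs"
      using connecting
    proof (rule successively3_mono)
      fix a v b assume "a \<in> set xs" "v \<in> set xs" "b \<in> set xs" "m_open G W a v b"
      moreover from this have "a \<in> U" "v \<in> U" "b \<in> U" using \<open>set xs \<subseteq> U\<close> by auto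
      ultimately show "m_open (induced G U) W a v b"
        using descendants_induced_pendant[of v] H unfolding m_open_def by (auto simp: arrow_into_induced)
    qed
    then show False using H path \<open>set xs \<subseteq> U\<close> unfolding m_separated_iff mg_path_induced by blast
  qed
  then show "cond_indep P X Y W" using GMP XY H unfolding GMP_def by blast
qed
end

section \<open>Harmonious skeletons\<close>

lemma sat12_insert_pendant:
  assumes "sat12 P U S" "t \<notin> U" "p \<in> U" "\<And>\<omega>. \<omega> \<in> set_pmf P \<Longrightarrow> \<omega> t = f (\<omega> p)"
  shows "sat12 P (insert t U) (insert {p, t} S)"
proof -
  obtain G where G: "is_MAG U G" "skeleton G = S" "GMP P U G" using assms(1) unfolding sat12_def by blast
  have "GMP P (insert t U) (add_edge G p t)"
    using G(1) assms(2-4) G(3) by (rule GMP_add_edge)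
  then show ?thesis
    unfolding sat12_def using G assms(2,3)
    by (intro exI[of _ "add_edge G p t"]) (simp add: is_MAG_add_edge skeleton_add_edge)
qed

lemma functional_child_not_isolated:
  assumes "GMP P V G" "t \<in> V" "p \<in> V" "t \<noteq> p"
    and "\<And>\<omega>. \<omega> \<in> set_pmf P \<Longrightarrow> \<omega> t = f (\<omega> p)"
    and "\<exists>\<omega>\<^sub>1\<in>set_pmf P. \<exists>\<omega>\<^sub>2\<in>set_pmf P. \<omega>\<^sub>1 t \<noteq> \<omega>\<^sub>2 t"
  shows "\<exists>z. adj G t z"
proof (rule ccontr)
  assume isolated: "\<nexists>z. adj G t z"
  have "m_separated G t p {}"
    unfolding m_separated_def
  proof (intro allI impI)
    fix xs assume "mg_path G t p xs"
    then have "adj G (xs ! 0) (xs ! 1)" "xs ! 0 = t"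
      unfolding mg_path_def by (auto intro: successively_nth) (cases xs; simp)
    with isolated show "blocked G xs {}" by auto
  qed
  then have "cond_indep P t p {}" using assms(1-4) unfolding GMP_def by blast
  moreover obtain \<omega>\<^sub>1 \<omega>\<^sub>2 where "\<omega>\<^sub>1 \<in> set_pmf P" "\<omega>\<^sub>2 \<in> set_pmf P" "\<omega>\<^sub>1 t \<noteq> \<omega>\<^sub>2 t"
    using assms(6) by blast
  with assms(5) have "\<not> cond_indep P t p {}" by (rule not_cond_indep_child_parent)
  ultimately show False by contradiction
qed

lemma sat12_delete_pendant:
  assumes MAG: "is_MAG (insert t U) G" and GMP: "GMP P (insert t U) G"
    and "t \<notin> U" "p \<in> U" and pendant: "\<And>z. adj G t z \<Longrightarrow> z = p"
  shows "sat12 P U (skeleton G - {{p, t}})"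
  unfolding sat12_def
proof (intro exI conjI)
  show "is_MAG U (induced G U)" using MAG by (rule is_MAG_induced) blast
  show "skeleton (induced G U) = skeleton G - {{p, t}}"
    using MAG assms(3,4) pendant by (rule skeleton_induced_pendant)
  show "GMP P U (induced G U)"
    using MAG assms(3,4) pendant GMP by (rule GMP_induced_pendant)
qed

lemma harmonious_insert_pendant:
  assumes harmonious: "harmonious P U S" and t_notin: "t \<notin> U" and p_in: "p \<in> U"
    and "fdep P p t" and nonconstant: "\<exists>\<omega>\<^sub>1\<in>set_pmf P. \<exists>\<omega>\<^sub>2\<in>set_pmf P. \<omega>\<^sub>1 t \<noteq> \<omega>\<^sub>2 t"
  shows "harmonious P (insert t U) (insert {p, t} S)"
proof -
  obtain f where functional: "\<And>\<omega>. \<omega> \<in> set_pmf P \<Longrightarrow> \<omega> t = f (\<omega> p)"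
    using \<open>fdep P p t\<close> unfolding fdep_def by (auto simp: AE_measure_pmf_iff)
  have sat: "sat12 P U S" and minimal: "\<nexists>S'. S' \<subset> S \<and> sat12 P U S'"
    using harmonious unfolding harmonious_def by blast+
  have t_notin_S: "{t, z} \<notin> S" for z
  proof
    assume "{t, z} \<in> S"
    moreover obtain G where "is_MAG U G" "skeleton G = S" using sat unfolding sat12_def by blast
    ultimately obtain x y where "{t, z} = {x, y}" "adj G x y" "is_MAG U G"
      unfolding skeleton_def by blast
    then show False using adj_in_vertices[of U G x y] t_notin by (auto simp: doubleton_eq_iff)
  qed
  have "\<nexists>S'. S' \<subset> insert {p, t} S \<and> sat12 P (insert t U) S'"
  proof
    assume "\<exists>S'. S' \<subset> insert {p, t} S \<and> sat12 P (insert t U) S'"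
    then obtain G where smaller: "skeleton G \<subset> insert {p, t} S" and MAG: "is_MAG (insert t U) G"
      and GMP: "GMP P (insert t U) G"
      unfolding sat12_def by blast
    have edge: "{t, z} \<in> skeleton G" if "adj G t z" for z
      using that unfolding skeleton_def by blast
    have pendant: "z = p" if "adj G t z" for z
    proof -
      have "{t, z} = {p, t}" using edge[OF that] smaller t_notin_S by blast
      then show "z = p" using p_in t_notin by (auto simp: doubleton_eq_iff)
    qed
    have "\<exists>z. adj G t z"
      by (rule functional_child_not_isolated[where p = p, OF GMP _ _ _ functional nonconstant])
        (use p_in t_notin in auto)
    then have "{p, t} \<in> skeleton G" using edge pendant by (metis insert_commute)
    then have "skeleton G - {{p, t}} \<subset> S"
      using smaller t_notin_S[of p] by (auto simp: insert_commute)
    moreover have "sat12 P U (skeleton G - {{p, t}})"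
      using MAG GMP t_notin p_in pendant by (rule sat12_delete_pendant)
    ultimately show False using minimal by blast
  qed
  then show ?thesis
    unfolding harmonious_def using sat12_insert_pendant[OF sat t_notin p_in functional] by blast
qed

lemma stage1_steps_harmonious:
  assumes "(stage1_step P V)\<^sup>*\<^sup>* s (R, S2)" and "harmonious P R S1"
    and nonconstant: "\<forall>X\<in>V. \<exists>\<omega>\<^sub>1\<in>set_pmf P. \<exists>\<omega>\<^sub>2\<in>set_pmf P. \<omega>\<^sub>1 X \<noteq> \<omega>\<^sub>2 X"
  shows "\<exists>T. S2 = snd s \<union> T \<and> harmonious P (fst s) (S1 \<union> T)"
  using assms(1)
proof (induction rule: converse_rtranclp_induct)
  case base
  show ?case using assms(2) by (intro exI[of _ "{}"]) simp
next
  case (step s s')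
  from step.hyps(1) obtain C S X Y where s: "s = (C, S)" "s' = (C - {X}, insert {X, Y} S)"
    and "X \<in> C" "Y \<in> C" and edge: "(Y, X) \<in> fd_graph P V"
    by (cases rule: stage1_step.cases) blast
  obtain T where T: "S2 = snd s' \<union> T" "harmonious P (fst s') (S1 \<union> T)" using step.IH by blast
  have "X \<in> V" "Y \<noteq> X" "fdep P Y X" using edge unfolding fd_graph_def by auto
  then have "harmonious P (insert X (C - {X})) (insert {Y, X} (S1 \<union> T))"
    using T s \<open>Y \<in> C\<close> nonconstant by (intro harmonious_insert_pendant) auto
  moreover have "insert X (C - {X}) = C" using \<open>X \<in> C\<close> by blast
  ultimately show ?case
    using T s by (intro exI[of _ "insert {X, Y} T"]) (auto simp: insert_commute)
qed

theorem theorem3p6: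
  fixes P :: "('v \<Rightarrow> 'a) pmf" and V R :: "'v set" and S1 S2 :: "'v set set"
  assumes "finite V"
    and "\<forall>X\<in>V. \<exists>\<omega>1\<in>set_pmf P. \<exists>\<omega>2\<in>set_pmf P. \<omega>1 X \<noteq> \<omega>2 X"
    and "acyclic (fd_graph P V)"
    and "stage1_run P V R S2"
    and "harmonious P R S1"
  shows "harmonious P V (S1 \<union> S2)"
proof -
  have "(stage1_step P V)\<^sup>*\<^sup>* (V, {}) (R, S2)" using assms(4) unfolding stage1_run_def by blast
  then show ?thesis using stage1_steps_harmonious assms(2,5) by fastforce
qed

end
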